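(* Let $(V_1, V_2)$ be an isometric pair such that $C(V_1, V_2)$ is compact. Then \[ \operatorname{rank} C(V_1, V_2) = 2\, \operatorname{rank} [V_2^*, V_1] + \dim E_1 - \dim E_{-1}. \]
   Context: All Hilbert spaces are complex and separable. An isometric pair is a pair $(V_1,V_2)$ of commuting isometries on $\mathcal{H}$. $[V_2^*,V_1] := V_2^*V_1 - V_1V_2^*$. $C(V_1,V_2) := I - V_1V_1^* - V_2V_2^* + V_1V_2V_1^*V_2^*$ and $E_\mu := \ker(C(V_1,V_2)-\mu I)$. *)

theory Defs
  imports "HOL-Analysis.Analysis"
begin

text \<open>Concrete model of a complex separable Hilbert space: l2 over a countable
index type 'i (every nonzero separable Hilbert space is unitarily equivalent to one of these).
Operators are functions on 'i \<Rightarrow> complex; only their behaviour on l2 matters.\<close>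

definition l2 :: "('i::countable \<Rightarrow> complex) set" where
  "l2 = {f. (\<lambda>i. (cmod (f i))\<^sup>2) summable_on UNIV}"

definition cinner :: "('i::countable \<Rightarrow> complex) \<Rightarrow> ('i \<Rightarrow> complex) \<Rightarrow> complex" where
  "cinner f g = (\<Sum>\<^sub>\<infinity>i. cnj (f i) * g i)"

definition l2norm :: "('i::countable \<Rightarrow> complex) \<Rightarrow> real" where
  "l2norm f = sqrt (\<Sum>\<^sub>\<infinity>i. (cmod (f i))\<^sup>2)"

definition bounded_op :: "(('i::countable \<Rightarrow> complex) \<Rightarrow> ('i \<Rightarrow> complex)) \<Rightarrow> bool" where
  "bounded_op T \<longleftrightarrow>
     (\<forall>f\<in>l2. T f \<in> l2) \<and>
     (\<forall>f\<in>l2. \<forall>g\<in>l2. \<forall>a b. T (\<lambda>i. a * f i + b * g i) = (\<lambda>i. a * T f i + b * T g i)) \<and>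
     (\<exists>K. \<forall>f\<in>l2. l2norm (T f) \<le> K * l2norm f)"

text \<open>The Hilbert-space adjoint (exists and is unique on l2 by the Riesz representation theorem).\<close>
definition adj :: "(('i::countable \<Rightarrow> complex) \<Rightarrow> ('i \<Rightarrow> complex)) \<Rightarrow> (('i \<Rightarrow> complex) \<Rightarrow> ('i \<Rightarrow> complex))" where
  "adj T = (SOME S. bounded_op S \<and> (\<forall>f\<in>l2. \<forall>g\<in>l2. cinner (T f) g = cinner f (S g)))"

definition isometry :: "(('i::countable \<Rightarrow> complex) \<Rightarrow> ('i \<Rightarrow> complex)) \<Rightarrow> bool" where
  "isometry V \<longleftrightarrow> bounded_op V \<and> (\<forall>f\<in>l2. l2norm (V f) = l2norm f)"

definition isometric_pair :: "(('i::countable \<Rightarrow> complex) \<Rightarrow> ('i \<Rightarrow> complex)) \<Rightarrow> (('i \<Rightarrow> complex) \<Rightarrow> ('i \<Rightarrow> complex)) \<Rightarrow> bool" where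
  "isometric_pair V1 V2 \<longleftrightarrow> isometry V1 \<and> isometry V2 \<and> (\<forall>f\<in>l2. V1 (V2 f) = V2 (V1 f))"

definition compact_op :: "(('i::countable \<Rightarrow> complex) \<Rightarrow> ('i \<Rightarrow> complex)) \<Rightarrow> bool" where
  "compact_op T \<longleftrightarrow> bounded_op T \<and>
     (\<forall>x::nat \<Rightarrow> ('i \<Rightarrow> complex). (\<forall>n. x n \<in> l2) \<longrightarrow> (\<exists>B. \<forall>n. l2norm (x n) \<le> B) \<longrightarrow>
        (\<exists>r g. strict_mono r \<and> g \<in> l2 \<and> (\<lambda>n. l2norm (\<lambda>i. T (x (r n)) i - g i)) \<longlonglongrightarrow> 0))"

definition cindep :: "('i \<Rightarrow> complex) set \<Rightarrow> bool" where
  "cindep B \<longleftrightarrow> (\<forall>c. (\<lambda>i. \<Sum>b\<in>B. c b * b i) = (\<lambda>i. 0) \<longrightarrow> (\<forall>b\<in>B. c b = 0))"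

definition cdim :: "('i \<Rightarrow> complex) set \<Rightarrow> enat" where
  "cdim S = (SUP B\<in>{B. finite B \<and> B \<subseteq> S \<and> cindep B}. enat (card B))"

definition rank :: "(('i::countable \<Rightarrow> complex) \<Rightarrow> ('i \<Rightarrow> complex)) \<Rightarrow> enat" where
  "rank T = cdim (T ` l2)"

definition defect :: "(('i::countable \<Rightarrow> complex) \<Rightarrow> ('i \<Rightarrow> complex)) \<Rightarrow> (('i \<Rightarrow> complex) \<Rightarrow> ('i \<Rightarrow> complex)) \<Rightarrow> (('i \<Rightarrow> complex) \<Rightarrow> ('i \<Rightarrow> complex))" where
  "defect V1 V2 = (\<lambda>f i. f i - V1 (adj V1 f) i - V2 (adj V2 f) i
                         + V1 (V2 (adj V1 (adj V2 f))) i)"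

definition commut :: "(('i::countable \<Rightarrow> complex) \<Rightarrow> ('i \<Rightarrow> complex)) \<Rightarrow> (('i \<Rightarrow> complex) \<Rightarrow> ('i \<Rightarrow> complex)) \<Rightarrow> (('i \<Rightarrow> complex) \<Rightarrow> ('i \<Rightarrow> complex))" where
  "commut V1 V2 = (\<lambda>f i. adj V2 (V1 f) i - V1 (adj V2 f) i)"

definition eigsp :: "(('i::countable \<Rightarrow> complex) \<Rightarrow> ('i \<Rightarrow> complex)) \<Rightarrow> (('i \<Rightarrow> complex) \<Rightarrow> ('i \<Rightarrow> complex)) \<Rightarrow> complex \<Rightarrow> ('i \<Rightarrow> complex) set" where
  "eigsp V1 V2 \<mu> = {f\<in>l2. defect V1 V2 f = (\<lambda>i. \<mu> * f i)}"

end

theory Submission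
  imports Defs "HOL-Library.Function_Algebras"
begin

text \<open>Write \<open>P = I - V\<^sub>1V\<^sub>1\<^sup>*\<close> for the projection onto \<open>ker V\<^sub>1\<^sup>*\<close> and \<open>R = V\<^sub>2PV\<^sub>2\<^sup>*\<close>.
  Because \<open>V\<^sub>1\<close> and \<open>V\<^sub>2\<close> are commuting isometries, \<open>R\<close> is again an orthogonal projection,
  \<open>C(V\<^sub>1,V\<^sub>2) = P - R\<close>, and \<open>(I - P)R = V\<^sub>1[V\<^sub>2\<^sup>*,V\<^sub>1]\<^sup>*V\<^sub>2\<^sup>*\<close>, so that
  \<open>rank [V\<^sub>2\<^sup>*,V\<^sub>1] = rank (I - P)R\<close>. The theorem thus becomes a statement about two
  orthogonal projections \<open>P\<close>, \<open>R\<close> with \<open>C = P - R\<close>: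
  \<open>rank C = 2 rank (I - P)R + dim ker (C - 1) - dim ker (C + 1)\<close>, where the two kernels are
  finite-dimensional because \<open>C\<close> is compact.

  If \<open>C\<close> has finite rank, \<open>M = ran C\<^sup>2\<close> is a finite-dimensional space invariant under
  \<open>P\<close> and \<open>R\<close> on which \<open>C\<close> is injective and which carries the whole range of \<open>C\<close>. Hence
  \<open>rank C = dim M = dim PM + dim (M \<inter> ker P)\<close>, while \<open>R\<close> maps \<open>M \<inter> ker P\<close> and \<open>I - P\<close> maps
  \<open>RM\<close> injectively, giving \<open>dim (M \<inter> ker P) = dim RM = rank (I - P)R\<close>. Comparing
  \<open>PM\<close> and \<open>RM\<close> inside \<open>M\<close> yields \<open>dim RM + dim ker (C - 1) = dim PM + dim ker (C + 1)\<close>.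
  If \<open>C\<close> has infinite rank, finiteness of \<open>rank (I - P)R\<close> and of \<open>ker (C - 1)\<close> would force
  \<open>P(I - R)\<close> and hence \<open>C = P(I - R) - (I - P)R\<close> to have finite rank.\<close>

section \<open>The Hilbert space \<open>l2\<close>\<close>

definition cscale :: "complex \<Rightarrow> ('i \<Rightarrow> complex) \<Rightarrow> ('i \<Rightarrow> complex)" where
  "cscale c f = (\<lambda>i. c * f i)"

lemma cscale_apply: "cscale c f i = c * f i"
  by (simp add: cscale_def)

lemma cmod_add_sq_le: "(cmod (a + b))\<^sup>2 \<le> 2 * (cmod a)\<^sup>2 + 2 * (cmod b)\<^sup>2"
proof -
  have "(cmod (a + b))\<^sup>2 \<le> (cmod a + cmod b)\<^sup>2"
    by (simp add: norm_triangle_ineq power_mono)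
  also have "\<dots> = 2 * (cmod a)\<^sup>2 + 2 * (cmod b)\<^sup>2 - (cmod a - cmod b)\<^sup>2"
    by (simp add: power2_eq_square algebra_simps)
  finally show ?thesis using zero_le_power2[of "cmod a - cmod b"] by linarith
qed

lemma l2_summable: "f \<in> l2 \<Longrightarrow> (\<lambda>i. (cmod (f i))\<^sup>2) summable_on UNIV"
  unfolding l2_def by simp

lemma l2_add[intro]: assumes "f \<in> l2" "g \<in> l2" shows "f + g \<in> l2"
proof -
  have "(\<lambda>i. 2 * (cmod (f i))\<^sup>2 + 2 * (cmod (g i))\<^sup>2) summable_on UNIV"
    using assms by (intro summable_on_add summable_on_cmult_right l2_summable)
  hence "(\<lambda>i. (cmod (f i + g i))\<^sup>2) summable_on UNIV"
    by (rule summable_on_comparison_test) (auto simp: cmod_add_sq_le)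
  thus ?thesis by (simp add: l2_def)
qed

lemma l2_cscale[intro]: assumes "f \<in> l2" shows "cscale c f \<in> l2"
proof -
  have "(\<lambda>i. (cmod c)\<^sup>2 * (cmod (f i))\<^sup>2) summable_on UNIV"
    using assms by (intro summable_on_cmult_right l2_summable)
  thus ?thesis unfolding l2_def by (simp add: cscale_apply norm_mult power_mult_distrib)
qed

lemma l2_zero[intro, simp]: "0 \<in> l2"
  unfolding l2_def by simp

lemma l2_uminus[intro]: "f \<in> l2 \<Longrightarrow> - f \<in> l2"
  unfolding l2_def by simp

lemma l2_diff[intro]: "f \<in> l2 \<Longrightarrow> g \<in> l2 \<Longrightarrow> f - g \<in> l2"
  using l2_add[of f "- g"] by auto

lemma cinner_summable:
  assumes "f \<in> l2" "g \<in> l2"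
  shows "(\<lambda>i. cnj (f i) * g i) summable_on UNIV"
proof -
  have bound: "norm (cnj (f i) * g i) \<le> (cmod (f i))\<^sup>2 + (cmod (g i))\<^sup>2" for i
    using sum_squares_bound[of "cmod (f i)" "cmod (g i)"]
      mult_nonneg_nonneg[OF norm_ge_zero[of "f i"] norm_ge_zero[of "g i"]]
    by (simp only: norm_mult complex_mod_cnj)
  have "(\<lambda>i. (cmod (f i))\<^sup>2 + (cmod (g i))\<^sup>2) summable_on UNIV"
    using assms by (intro summable_on_add l2_summable)
  hence "(\<lambda>i. norm (cnj (f i) * g i)) summable_on UNIV"
    using bound by (rule Infinite_Sum.abs_summable_on_comparison_test')
  thus ?thesis using summable_on_iff_abs_summable_on_complex by blast
qed

lemma cinner_add_right:
  "f \<in> l2 \<Longrightarrow> g \<in> l2 \<Longrightarrow> h \<in> l2 \<Longrightarrow> cinner f (g + h) = cinner f g + cinner f h"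
  unfolding cinner_def
  by (simp add: distrib_left infsum_add cinner_summable)

lemma cinner_cscale_right: "cinner f (cscale c g) = c * cinner f g"
  unfolding cinner_def cscale_def
  by (simp add: mult.left_commute infsum_cmult_right')

lemma cinner_cnj: "cinner g f = cnj (cinner f g)"
  unfolding cinner_def by (simp flip: infsum_cnj add: mult.commute)

lemma cinner_add_left:
  "f \<in> l2 \<Longrightarrow> g \<in> l2 \<Longrightarrow> h \<in> l2 \<Longrightarrow> cinner (g + h) f = cinner g f + cinner h f"
  by (metis cinner_cnj cinner_add_right complex_cnj_add)

lemma cinner_cscale_left: "cinner (cscale c g) f = cnj c * cinner g f"
  by (metis cinner_cnj cinner_cscale_right complex_cnj_mult)

lemma cinner_zero_right[simp]: "cinner f 0 = 0"
  unfolding cinner_def by simp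

lemma cinner_zero_left[simp]: "cinner 0 f = 0"
  unfolding cinner_def by simp

lemma cinner_uminus_right: "cinner f (- g) = - cinner f g"
  unfolding cinner_def by (simp add: infsum_uminus)

lemma cinner_diff_right:
  "f \<in> l2 \<Longrightarrow> g \<in> l2 \<Longrightarrow> h \<in> l2 \<Longrightarrow> cinner f (g - h) = cinner f g - cinner f h"
  using cinner_add_right[of f g "- h"] cinner_uminus_right[of f h] l2_uminus[of h]
  by simp

lemma cinner_diff_left:
  "f \<in> l2 \<Longrightarrow> g \<in> l2 \<Longrightarrow> h \<in> l2 \<Longrightarrow> cinner (g - h) f = cinner g f - cinner h f"
  by (metis cinner_cnj cinner_diff_right complex_cnj_diff)

lemma l2norm_sq: "(l2norm f)\<^sup>2 = (\<Sum>\<^sub>\<infinity>i. (cmod (f i))\<^sup>2)"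
  unfolding l2norm_def using infsum_nonneg[of UNIV "\<lambda>i. (cmod (f i))\<^sup>2"] by simp

lemma l2norm_nonneg[simp]: "0 \<le> l2norm f"
  unfolding l2norm_def using infsum_nonneg[of UNIV "\<lambda>i. (cmod (f i))\<^sup>2"] by simp

lemma cinner_self: "cinner f f = complex_of_real ((l2norm f)\<^sup>2)"
proof -
  have e: "cnj (f i) * f i = complex_of_real ((cmod (f i))\<^sup>2)" for i
    by (metis complex_norm_square mult.commute)
  have "cinner f f = (\<Sum>\<^sub>\<infinity>i. complex_of_real ((cmod (f i))\<^sup>2))"
    unfolding cinner_def e by (rule refl)
  also have "\<dots> = complex_of_real (\<Sum>\<^sub>\<infinity>i. (cmod (f i))\<^sup>2)"
  proof (cases "(\<lambda>i. (cmod (f i))\<^sup>2) summable_on UNIV")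
    case True thus ?thesis using has_sum_of_real[OF has_sum_infsum[OF True]] infsumI by blast
  next
    case False
    hence "\<not> (\<lambda>i. complex_of_real ((cmod (f i))\<^sup>2)) summable_on UNIV"
      using summable_on_Re[of "\<lambda>i. complex_of_real ((cmod (f i))\<^sup>2)" UNIV] by auto
    thus ?thesis using False infsum_not_exists by (metis of_real_0)
  qed
  finally show ?thesis by (simp add: l2norm_sq)
qed

lemma cinner_self_zero:
  assumes "f \<in> l2" "cinner f f = 0" shows "f = 0"
proof
  fix i
  have "(\<Sum>\<^sub>\<infinity>i. (cmod (f i))\<^sup>2) = 0" using assms(2) cinner_self[of f] l2norm_sq[of f] by simp
  hence "(cmod (f i))\<^sup>2 = 0"
    by (intro nonneg_infsum_le_0D[of _ UNIV]) (auto simp: l2_summable assms)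
  thus "f i = 0 i" by simp
qed

lemma l2norm_zero_iff: "f \<in> l2 \<Longrightarrow> l2norm f = 0 \<longleftrightarrow> f = 0"
  using cinner_self_zero[of f] cinner_self[of f] by (auto simp: l2norm_def)

lemma cmod_cinner_le_weighted:
  assumes f: "f \<in> l2" and g: "g \<in> l2" and t: "t > 0"
  shows "cmod (cinner f g) \<le> t/2 * (l2norm f)\<^sup>2 + 1/(2*t) * (l2norm g)\<^sup>2"
proof -
  have abs: "(\<lambda>i. cmod (f i) * cmod (g i)) summable_on UNIV"
    using summable_on_iff_abs_summable_on_complex[THEN iffD1, OF cinner_summable[OF f g]]
    by (simp add: norm_mult)
  have sf: "(\<lambda>i. t/2 * (cmod (f i))\<^sup>2) summable_on UNIV"
    using f by (intro summable_on_cmult_right l2_summable)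
  have sg: "(\<lambda>i. 1/(2*t) * (cmod (g i))\<^sup>2) summable_on UNIV"
    using g by (intro summable_on_cmult_right l2_summable)
  have "cmod (cinner f g) \<le> (\<Sum>\<^sub>\<infinity>i. cmod (cnj (f i) * g i))"
    unfolding cinner_def using abs by (intro norm_infsum_bound) (simp add: norm_mult)
  also have "\<dots> = (\<Sum>\<^sub>\<infinity>i. cmod (f i) * cmod (g i))"
    by (simp add: norm_mult)
  also have "\<dots> \<le> (\<Sum>\<^sub>\<infinity>i. t/2 * (cmod (f i))\<^sup>2 + 1/(2*t) * (cmod (g i))\<^sup>2)"
  proof (rule infsum_mono[OF abs summable_on_add[OF sf sg]])
    fix i
    have "0 \<le> (t * cmod (f i) - cmod (g i))\<^sup>2" by simp
    thus "cmod (f i) * cmod (g i) \<le> t/2 * (cmod (f i))\<^sup>2 + 1/(2*t) * (cmod (g i))\<^sup>2"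
      using t by (simp add: power2_diff power_mult_distrib field_simps power2_eq_square)
  qed
  also have "\<dots> = t/2 * (l2norm f)\<^sup>2 + 1/(2*t) * (l2norm g)\<^sup>2"
    by (simp only: infsum_add[OF sf sg] infsum_cmult_right' l2norm_sq)
  finally show ?thesis .
qed

lemma cinner_cauchy_schwarz:
  assumes f: "f \<in> l2" and g: "g \<in> l2"
  shows "cmod (cinner f g) \<le> l2norm f * l2norm g"
proof (cases "l2norm f = 0 \<or> l2norm g = 0")
  case True
  hence "f = 0 \<or> g = 0" using l2norm_zero_iff f g by blast
  thus ?thesis by auto
next
  case False
  hence pos: "l2norm f > 0" "l2norm g > 0" using l2norm_nonneg[of f] l2norm_nonneg[of g] by linarith+
  define t where "t = l2norm g / l2norm f"
  have "cmod (cinner f g) \<le> t/2 * (l2norm f)\<^sup>2 + 1/(2*t) * (l2norm g)\<^sup>2"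
    using pos by (intro cmod_cinner_le_weighted f g) (simp add: t_def)
  also have "\<dots> = l2norm f * l2norm g"
    using pos by (simp add: t_def field_simps power2_eq_square)
  finally show ?thesis .
qed

lemma l2norm_diff_sq_le:
  assumes a: "a \<in> l2" and b: "b \<in> l2" and g: "g \<in> l2"
  shows "(l2norm (a - b))\<^sup>2 \<le> 2 * (l2norm (a - g))\<^sup>2 + 2 * (l2norm (b - g))\<^sup>2"
proof -
  have s1: "(\<lambda>i. (cmod ((a - b) i))\<^sup>2) summable_on UNIV" using l2_diff[OF a b] unfolding l2_def by simp
  have s2: "(\<lambda>i. 2 * (cmod ((a - g) i))\<^sup>2 + 2 * (cmod ((b - g) i))\<^sup>2) summable_on UNIV"
    using l2_diff[OF a g] l2_diff[OF b g] unfolding l2_def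
    by (intro summable_on_add summable_on_cmult_right) auto
  have "(l2norm (a - b))\<^sup>2 \<le> (\<Sum>\<^sub>\<infinity>i. 2 * (cmod ((a - g) i))\<^sup>2 + 2 * (cmod ((b - g) i))\<^sup>2)"
    unfolding l2norm_sq
  proof (rule infsum_mono[OF s1 s2])
    fix i
    have "(a - b) i = (a i - g i) + (g i - b i)" by simp
    hence "(cmod ((a - b) i))\<^sup>2 \<le> 2 * (cmod (a i - g i))\<^sup>2 + 2 * (cmod (g i - b i))\<^sup>2"
      using cmod_add_sq_le[of "a i - g i" "g i - b i"] by simp
    also have "cmod (g i - b i) = cmod (b i - g i)" by (rule norm_minus_commute)
    finally show "(cmod ((a - b) i))\<^sup>2 \<le> 2 * (cmod ((a - g) i))\<^sup>2 + 2 * (cmod ((b - g) i))\<^sup>2" by simp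
  qed
  also have "\<dots> = 2 * (l2norm (a - g))\<^sup>2 + 2 * (l2norm (b - g))\<^sup>2"
    using l2_diff[OF a g] l2_diff[OF b g] unfolding l2_def l2norm_sq
    by (subst infsum_add) (auto intro: summable_on_cmult_right simp: infsum_cmult_right')
  finally show ?thesis .
qed

lemma l2_eqI:
  assumes "x \<in> l2" "y \<in> l2" "\<And>f. f \<in> l2 \<Longrightarrow> cinner f x = cinner f y"
  shows "x = y"
proof -
  have "cinner (x - y) (x - y) = 0"
    using assms cinner_diff_right[of "x - y" x y] by auto
  hence "x - y = 0" using assms by (intro cinner_self_zero) auto
  thus ?thesis by simp
qed

lemma cinner_add_add:
  assumes "x \<in> l2" "y \<in> l2"
  shows "cinner (x + y) (x + y) = cinner x x + cinner y y + cinner x y + cnj (cinner x y)"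
  using assms by (simp add: cinner_add_left cinner_add_right l2_add cinner_cnj[of y x])

section \<open>Dimension of subspaces\<close>

interpretation cvec: vector_space "cscale :: complex \<Rightarrow> ('i \<Rightarrow> complex) \<Rightarrow> ('i \<Rightarrow> complex)"
  by unfold_locales (auto simp: cscale_def fun_eq_iff algebra_simps)

lemma sum_fun_apply: "(sum g A) x = (\<Sum>a\<in>A. g a x)"
  by (induction A rule: infinite_finite_induct) auto

lemma sum_cscale_apply: "(\<Sum>v\<in>B. cscale (u v) (v::'i \<Rightarrow> complex)) = (\<lambda>i. \<Sum>v\<in>B. u v * v i)"
  by (auto simp: sum_fun_apply cscale_apply)

lemma cvec_independent_finite_iff:
  assumes "finite B"
  shows "cvec.independent B \<longleftrightarrow> (\<forall>u. (\<Sum>v\<in>B. cscale (u v) v) = 0 \<longrightarrow> (\<forall>v\<in>B. u v = 0))"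
proof
  assume "cvec.independent B" thus "\<forall>u. (\<Sum>v\<in>B. cscale (u v) v) = 0 \<longrightarrow> (\<forall>v\<in>B. u v = 0)"
    using cvec.independentD[of B B] assms by blast
next
  assume H: "\<forall>u. (\<Sum>v\<in>B. cscale (u v) v) = 0 \<longrightarrow> (\<forall>v\<in>B. u v = 0)"
  show "cvec.independent B" unfolding cvec.independent_explicit_module
  proof (intro allI impI)
    fix t u v assume t: "finite t" "t \<subseteq> B" "(\<Sum>v\<in>t. cscale (u v) v) = 0" "v \<in> t"
    define u' where "u' = (\<lambda>v. if v \<in> t then u v else 0)"
    have "(\<Sum>v\<in>B. cscale (u' v) v) = (\<Sum>v\<in>t. cscale (u' v) v)"
      using t assms by (intro sum.mono_neutral_right) (auto simp: u'_def cscale_def fun_eq_iff)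
    also have "\<dots> = (\<Sum>v\<in>t. cscale (u v) v)" by (intro sum.cong) (auto simp: u'_def)
    finally have "u' v = 0" using H t by auto
    thus "u v = 0" using t by (simp add: u'_def)
  qed
qed

lemma cindep_iff_independent: "finite B \<Longrightarrow> cindep B \<longleftrightarrow> cvec.independent B"
  unfolding cvec_independent_finite_iff cindep_def sum_cscale_apply zero_fun_def by simp

lemma cdim_eq_SUP_independent: "cdim S = (SUP B\<in>{B. finite B \<and> B \<subseteq> S \<and> cvec.independent B}. enat (card B))"
  unfolding cdim_def by (rule SUP_cong) (auto simp: cindep_iff_independent)

lemma card_le_cdim: "finite B \<Longrightarrow> B \<subseteq> S \<Longrightarrow> cvec.independent B \<Longrightarrow> enat (card B) \<le> cdim S"
  unfolding cdim_eq_SUP_independent by (rule SUP_upper) auto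

lemma cdim_le_card_span: "finite W \<Longrightarrow> S \<subseteq> cvec.span W \<Longrightarrow> cdim S \<le> enat (card W)"
  unfolding cdim_eq_SUP_independent
proof (rule SUP_least)
  fix B assume "finite W" "S \<subseteq> cvec.span W" "B \<in> {B. finite B \<and> B \<subseteq> S \<and> cvec.independent B}"
  thus "enat (card B) \<le> enat (card W)"
    using cvec.independent_span_bound[of W B] by auto
qed

lemma cdim_mono: "S \<subseteq> T \<Longrightarrow> cdim S \<le> cdim T"
  unfolding cdim_eq_SUP_independent by (rule SUP_subset_mono) auto

lemma cdim_finite_basis:
  assumes "cdim S \<noteq> \<infinity>"
  shows "\<exists>B. finite B \<and> B \<subseteq> S \<and> cvec.independent B \<and> S \<subseteq> cvec.span B \<and> cdim S = enat (card B)"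
proof -
  obtain n where n: "cdim S = enat n" using assms by (cases "cdim S") auto
  define F where "F = {B. finite B \<and> B \<subseteq> S \<and> cvec.independent B}"
  define N where "N = card ` F"
  have Nle: "k \<le> n" if "k \<in> N" for k
    using that card_le_cdim[of _ S] n unfolding N_def F_def by fastforce
  have finN: "finite N" using Nle by (meson finite_nat_set_iff_bounded_le)
  have "{} \<in> F" by (auto simp: F_def cvec.independent_empty)
  hence "0 \<in> N" unfolding N_def by force
  hence "Max N \<in> N" using finN by (intro Max_in) auto
  then obtain B where B: "B \<in> F" "card B = Max N" unfolding N_def by auto
  have maxB: "card B' \<le> card B" if "B' \<in> F" for B'
    using that finN B by (auto simp: N_def)
  have span: "S \<subseteq> cvec.span B"
  proof
    fix x assume x: "x \<in> S"
    show "x \<in> cvec.span B"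
    proof (rule ccontr)
      assume nx: "x \<notin> cvec.span B"
      hence "insert x B \<in> F" using B x cvec.independent_insertI unfolding F_def by auto
      moreover have "x \<notin> B" using nx cvec.span_base by blast
      ultimately have "card B + 1 \<le> card B" using maxB[of "insert x B"] B by (auto simp: F_def)
      thus False by simp
    qed
  qed
  have "cdim S = enat (card B)"
  proof (rule antisym)
    show "cdim S \<le> enat (card B)" using cdim_le_card_span[OF _ span] B by (auto simp: F_def)
    show "enat (card B) \<le> cdim S" using B(1) unfolding F_def by (auto intro: card_le_cdim)
  qed
  thus ?thesis using B span by (auto simp: F_def)
qed

lemma cdim_finite_iff_span: "cdim S \<noteq> \<infinity> \<longleftrightarrow> (\<exists>W. finite W \<and> S \<subseteq> cvec.span W)"
proof
  assume "cdim S \<noteq> \<infinity>" thus "\<exists>W. finite W \<and> S \<subseteq> cvec.span W" using cdim_finite_basis by blast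
next
  assume "\<exists>W. finite W \<and> S \<subseteq> cvec.span W"
  then obtain W where "finite W" "S \<subseteq> cvec.span W" by blast
  hence "cdim S \<le> enat (card W)" using cdim_le_card_span[of W S] by auto
  thus "cdim S \<noteq> \<infinity>" by (cases "cdim S") auto
qed

definition linear_on :: "(('i \<Rightarrow> complex) \<Rightarrow> ('i \<Rightarrow> complex)) \<Rightarrow> ('i \<Rightarrow> complex) set \<Rightarrow> bool" where
  "linear_on f U \<longleftrightarrow> (\<forall>x\<in>U. \<forall>y\<in>U. f (x + y) = f x + f y) \<and> (\<forall>x\<in>U. \<forall>c. f (cscale c x) = cscale c (f x))"

lemma linear_on_add: "linear_on f U \<Longrightarrow> x \<in> U \<Longrightarrow> y \<in> U \<Longrightarrow> f (x + y) = f x + f y"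
  by (simp add: linear_on_def)

lemma linear_on_cscale: "linear_on f U \<Longrightarrow> x \<in> U \<Longrightarrow> f (cscale c x) = cscale c (f x)"
  by (simp add: linear_on_def)

lemma linear_on_zero: "linear_on f U \<Longrightarrow> cvec.subspace U \<Longrightarrow> f 0 = 0"
  using linear_on_cscale[of f U 0 0] cvec.subspace_0[of U] by simp

lemma linear_on_uminus: "linear_on f U \<Longrightarrow> x \<in> U \<Longrightarrow> f (- x) = - f x"
  using linear_on_cscale[of f U x "-1"] by (simp add: cscale_def fun_eq_iff fun_Compl_def)

lemma linear_on_diff: "linear_on f U \<Longrightarrow> cvec.subspace U \<Longrightarrow> x \<in> U \<Longrightarrow> y \<in> U \<Longrightarrow> f (x - y) = f x - f y"
  using linear_on_add[of f U x "- y"] linear_on_uminus[of f U y] cvec.subspace_neg[of U y] by simp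

lemma linear_on_sum:
  assumes "linear_on f U" "cvec.subspace U" "\<And>b. b \<in> B \<Longrightarrow> g b \<in> U"
  shows "f (\<Sum>b\<in>B. cscale (c b) (g b)) = (\<Sum>b\<in>B. cscale (c b) (f (g b)))"
  using assms(3)
proof (induction B rule: infinite_finite_induct)
  case (infinite A)
  have "(\<Sum>b\<in>A. cscale (c b) (g b)) = 0" "(\<Sum>b\<in>A. cscale (c b) (f (g b))) = 0" using infinite by simp_all
  thus ?case using linear_on_zero[OF assms(1,2)] by metis
next
  case empty show ?case using linear_on_zero[OF assms(1,2)] by (simp only: sum.empty)
next
  case (insert x F)
  have "(\<Sum>b\<in>F. cscale (c b) (g b)) \<in> U" using insert assms(2) by (intro cvec.subspace_sum) (auto intro: cvec.subspace_scale)
  moreover have "cscale (c x) (g x) \<in> U" using insert assms(2) by (auto intro: cvec.subspace_scale)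
  ultimately have "f (cscale (c x) (g x) + (\<Sum>b\<in>F. cscale (c b) (g b))) = f (cscale (c x) (g x)) + f (\<Sum>b\<in>F. cscale (c b) (g b))"
    by (metis linear_on_add[OF assms(1)])
  also have "f (cscale (c x) (g x)) = cscale (c x) (f (g x))"
    using insert.prems by (intro linear_on_cscale[OF assms(1)]) simp
  also have "f (\<Sum>b\<in>F. cscale (c b) (g b)) = (\<Sum>b\<in>F. cscale (c b) (f (g b)))"
    using insert.IH insert.prems by blast
  finally show ?case by (simp only: sum.insert[OF insert.hyps])
qed

lemma linear_on_subset: "linear_on f U \<Longrightarrow> V \<subseteq> U \<Longrightarrow> linear_on f V"
  unfolding linear_on_def by blast

lemma subspace_image_linear_on:
  assumes "linear_on f U" "cvec.subspace U" shows "cvec.subspace (f ` U)"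
proof (rule cvec.subspaceI)
  show "0 \<in> f ` U" using linear_on_zero[OF assms] cvec.subspace_0[OF assms(2)] by force
  show "x + y \<in> f ` U" if "x \<in> f ` U" "y \<in> f ` U" for x y
    using that linear_on_add[OF assms(1)] cvec.subspace_add[OF assms(2)] by (smt (verit) image_iff)
  show "cscale c x \<in> f ` U" if "x \<in> f ` U" for c x
    using that linear_on_cscale[OF assms(1)] cvec.subspace_scale[OF assms(2)] by (smt (verit) image_iff)
qed

lemma subspace_kernel_linear_on:
  assumes "linear_on f U" "cvec.subspace U" shows "cvec.subspace {x\<in>U. f x = 0}"
proof (rule cvec.subspaceI)
  show "0 \<in> {x\<in>U. f x = 0}" using linear_on_zero[OF assms] cvec.subspace_0[OF assms(2)] by force
  show "x + y \<in> {x\<in>U. f x = 0}" if "x \<in> {x\<in>U. f x = 0}" "y \<in> {x\<in>U. f x = 0}" for x y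
    using that linear_on_add[OF assms(1)] cvec.subspace_add[OF assms(2)] by auto
  show "cscale c x \<in> {x\<in>U. f x = 0}" if "x \<in> {x\<in>U. f x = 0}" for c x
    using that linear_on_cscale[OF assms(1)] cvec.subspace_scale[OF assms(2)] by (auto simp: cscale_def zero_fun_def)
qed

lemma cdim_image_le:
  assumes lin: "linear_on f U" and sub: "cvec.subspace U"
  shows "cdim (f ` U) \<le> cdim U"
  unfolding cdim_eq_SUP_independent[of "f ` U"]
proof (rule SUP_least)
  fix B assume "B \<in> {B. finite B \<and> B \<subseteq> f ` U \<and> cvec.independent B}"
  hence B: "finite B" "B \<subseteq> f ` U" "cvec.independent B" by auto
  obtain g where g: "\<And>b. b \<in> B \<Longrightarrow> g b \<in> U \<and> f (g b) = b"
    using B(2) by (metis f_inv_into_f inv_into_into subset_iff)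
  have inj: "inj_on g B" using g by (metis inj_onI)
  have ind: "cvec.independent (g ` B)"
    unfolding cvec_independent_finite_iff[OF finite_imageI[OF B(1)]]
  proof (intro allI impI ballI)
    fix u y assume H: "(\<Sum>v\<in>g ` B. cscale (u v) v) = 0" "y \<in> g ` B"
    have "(\<Sum>b\<in>B. cscale (u (g b)) (g b)) = 0" using H(1) by (simp add: sum.reindex[OF inj])
    hence "f (\<Sum>b\<in>B. cscale (u (g b)) (g b)) = 0" using linear_on_zero[OF lin sub] by simp
    hence Z: "(\<Sum>b\<in>B. cscale (u (g b)) b) = 0" using linear_on_sum[OF lin sub, of B g "\<lambda>b. u (g b)"] g by simp
    from B(3) have A: "\<forall>c. (\<Sum>v\<in>B. cscale (c v) v) = 0 \<longrightarrow> (\<forall>v\<in>B. c v = 0)"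
      by (simp add: cvec_independent_finite_iff[OF B(1)])
    have "\<forall>b\<in>B. u (g b) = 0" using spec[OF A, of "\<lambda>b. u (g b)"] Z by simp
    thus "u y = 0" using H(2) by auto
  qed
  have "enat (card (g ` B)) \<le> cdim U"
    using card_le_cdim[of "g ` B" U] ind g B(1) by auto
  thus "enat (card B) \<le> cdim U" by (simp add: card_image[OF inj])
qed

lemma cdim_image_inj:
  assumes lin: "linear_on f U" and sub: "cvec.subspace U" and inj: "inj_on f U"
  shows "cdim (f ` U) = cdim U"
proof (rule antisym)
  show "cdim (f ` U) \<le> cdim U" by (rule cdim_image_le[OF lin sub])
  show "cdim U \<le> cdim (f ` U)"
    unfolding cdim_eq_SUP_independent[of U]
  proof (rule SUP_least)
    fix B assume "B \<in> {B. finite B \<and> B \<subseteq> U \<and> cvec.independent B}"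
    hence B: "finite B" "B \<subseteq> U" "cvec.independent B" by auto
    have injB: "inj_on f B" using inj B(2) inj_on_subset by blast
    have ind: "cvec.independent (f ` B)"
      unfolding cvec_independent_finite_iff[OF finite_imageI[OF B(1)]]
    proof (intro allI impI ballI)
      fix u y assume H: "(\<Sum>v\<in>f ` B. cscale (u v) v) = 0" "y \<in> f ` B"
      have "(\<Sum>b\<in>B. cscale (u (f b)) (f b)) = 0" using H(1) by (simp add: sum.reindex[OF injB])
      hence "f (\<Sum>b\<in>B. cscale (u (f b)) b) = f 0"
        using linear_on_sum[OF lin sub, of B "\<lambda>b. b" "\<lambda>b. u (f b)"] B linear_on_zero[OF lin sub] by auto
      moreover have "(\<Sum>b\<in>B. cscale (u (f b)) b) \<in> U"
        using B sub by (intro cvec.subspace_sum) (auto intro: cvec.subspace_scale)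
      ultimately have "(\<Sum>b\<in>B. cscale (u (f b)) b) = 0"
        using inj cvec.subspace_0[OF sub] by (meson inj_onD)
      moreover from B(3) have "\<forall>c. (\<Sum>v\<in>B. cscale (c v) v) = 0 \<longrightarrow> (\<forall>v\<in>B. c v = 0)"
        by (simp add: cvec_independent_finite_iff[OF B(1)])
      ultimately have "\<forall>b\<in>B. u (f b) = 0" using spec[of _ "\<lambda>b. u (f b)"] by blast
      thus "u y = 0" using H(2) by auto
    qed
    have "enat (card (f ` B)) \<le> cdim (f ` U)"
      using card_le_cdim[of "f ` B" "f ` U"] ind B by auto
    thus "enat (card B) \<le> cdim (f ` U)" by (simp add: card_image[OF injB])
  qed
qed

lemma cdim_set_plus_le:
  "cdim {x + y | x y. x \<in> A \<and> y \<in> B} \<le> cdim A + cdim B"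
proof (cases "cdim A = \<infinity> \<or> cdim B = \<infinity>")
  case True thus ?thesis by auto
next
  case False
  then obtain WA WB where W: "finite WA" "A \<subseteq> cvec.span WA" "cdim A = enat (card WA)"
    "finite WB" "B \<subseteq> cvec.span WB" "cdim B = enat (card WB)"
    using cdim_finite_basis by meson
  have "{x + y | x y. x \<in> A \<and> y \<in> B} \<subseteq> cvec.span (WA \<union> WB)"
  proof safe
    fix x y assume "x \<in> A" "y \<in> B"
    hence "x \<in> cvec.span (WA \<union> WB)" "y \<in> cvec.span (WA \<union> WB)"
      using W cvec.span_mono[of WA "WA \<union> WB"] cvec.span_mono[of WB "WA \<union> WB"] by auto
    thus "x + y \<in> cvec.span (WA \<union> WB)" by (rule cvec.span_add)
  qed
  hence "cdim {x + y | x y. x \<in> A \<and> y \<in> B} \<le> enat (card (WA \<union> WB))"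
    using W by (intro cdim_le_card_span) auto
  also have "\<dots> \<le> enat (card WA + card WB)" by (simp add: card_Un_le)
  finally show ?thesis using W by simp
qed

lemma independent_Un_of_disjoint_subspaces:
  assumes A: "cvec.subspace A" and B: "cvec.subspace B" and AB: "A \<inter> B \<subseteq> {0}"
    and BA: "finite BA" "BA \<subseteq> A" "cvec.independent BA"
    and BB: "finite BB" "BB \<subseteq> B" "cvec.independent BB"
  shows "cvec.independent (BA \<union> BB)" "BA \<inter> BB = {}"
proof -
  have "0 \<notin> BA" using BA(3) cvec.dependent_zero by blast
  thus disj: "BA \<inter> BB = {}" using BA BB AB by auto
  show "cvec.independent (BA \<union> BB)"
    unfolding cvec_independent_finite_iff[OF finite_UnI[OF BA(1) BB(1)]]
  proof (intro allI impI ballI)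
    fix u v assume H: "(\<Sum>v\<in>BA \<union> BB. cscale (u v) v) = 0" "v \<in> BA \<union> BB"
    define a where "a = (\<Sum>v\<in>BA. cscale (u v) v)"
    define b where "b = (\<Sum>v\<in>BB. cscale (u v) v)"
    have "a + b = 0"
      using H(1) by (simp add: a_def b_def sum.union_disjoint[OF BA(1) BB(1) disj])
    moreover have "a \<in> A" "b \<in> B" unfolding a_def b_def
      using BA BB A B by (auto intro!: cvec.subspace_sum cvec.subspace_scale)
    ultimately have "a = 0" "b = 0"
      using cvec.subspace_neg[OF B] AB by (auto simp: eq_neg_iff_add_eq_0[symmetric])
    thus "u v = 0"
      using H(2) BA(3) BB(3) unfolding a_def b_def
        cvec_independent_finite_iff[OF BA(1)] cvec_independent_finite_iff[OF BB(1)]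
      by blast
  qed
qed

lemma cdim_add_le_of_disjoint:
  assumes A: "cvec.subspace A" and B: "cvec.subspace B" and AB: "A \<inter> B \<subseteq> {0}"
    and U: "A \<subseteq> U" "B \<subseteq> U"
  shows "cdim A + cdim B \<le> cdim U"
proof (cases "cdim A = \<infinity> \<or> cdim B = \<infinity>")
  case True
  hence "cdim U = \<infinity>" using cdim_mono[OF U(1)] cdim_mono[OF U(2)] by auto
  thus ?thesis by simp
next
  case False
  then obtain BA BB where W: "finite BA" "BA \<subseteq> A" "cvec.independent BA" "cdim A = enat (card BA)"
    "finite BB" "BB \<subseteq> B" "cvec.independent BB" "cdim B = enat (card BB)"
    using cdim_finite_basis by meson
  note indep = independent_Un_of_disjoint_subspaces[OF A B AB W(1-3) W(5-7)]
  have "enat (card (BA \<union> BB)) \<le> cdim U"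
    using W U by (intro card_le_cdim indep(1)) auto
  thus ?thesis using W card_Un_disjoint[OF W(1) W(5) indep(2)] by simp
qed

lemma cdim_le_image_plus_kernel:
  assumes lin: "linear_on f U" and sub: "cvec.subspace U"
  shows "cdim U \<le> cdim (f ` U) + cdim {x\<in>U. f x = 0}"
proof (cases "cdim (f ` U) = \<infinity> \<or> cdim {x\<in>U. f x = 0} = \<infinity>")
  case True thus ?thesis by auto
next
  case False
  then obtain W1 W2 where W: "finite W1" "W1 \<subseteq> f ` U" "f ` U \<subseteq> cvec.span W1" "cdim (f ` U) = enat (card W1)"
    "finite W2" "W2 \<subseteq> {x\<in>U. f x = 0}" "{x\<in>U. f x = 0} \<subseteq> cvec.span W2" "cdim {x\<in>U. f x = 0} = enat (card W2)"
    using cdim_finite_basis by meson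
  obtain g where g: "\<And>b. b \<in> W1 \<Longrightarrow> g b \<in> U \<and> f (g b) = b"
    using W(2) by (metis f_inv_into_f inv_into_into subset_iff)
  have "U \<subseteq> cvec.span (g ` W1 \<union> W2)"
  proof
    fix x assume x: "x \<in> U"
    hence "f x \<in> cvec.span W1" using W by auto
    then obtain c where c: "f x = (\<Sum>w\<in>W1. cscale (c w) w)" using cvec.span_finite[OF W(1)] by auto
    define v where "v = (\<Sum>w\<in>W1. cscale (c w) (g w))"
    have vU: "v \<in> U" unfolding v_def using g sub by (intro cvec.subspace_sum) (auto intro: cvec.subspace_scale)
    have fv_eq: "f v = f x" unfolding v_def c using linear_on_sum[OF lin sub, of W1 g c] g by simp
    have "x - v \<in> {x\<in>U. f x = 0}" using linear_on_diff[OF lin sub x vU] fv_eq x vU cvec.subspace_diff[OF sub] by auto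
    hence "x - v \<in> cvec.span (g ` W1 \<union> W2)" using W(7) cvec.span_mono[of W2 "g ` W1 \<union> W2"] by auto
    moreover have "v \<in> cvec.span (g ` W1 \<union> W2)" unfolding v_def
      by (intro cvec.span_sum cvec.span_scale cvec.span_base) auto
    ultimately have "(x - v) + v \<in> cvec.span (g ` W1 \<union> W2)" by (rule cvec.span_add)
    thus "x \<in> cvec.span (g ` W1 \<union> W2)" by simp
  qed
  hence "cdim U \<le> enat (card (g ` W1 \<union> W2))" using W by (intro cdim_le_card_span) auto
  also have "\<dots> \<le> enat (card W1 + card W2)"
    using card_Un_le[of "g ` W1" W2] card_image_le[OF W(1), of g] by simp
  finally show ?thesis using W by simp
qed

lemma inj_on_endo_imp_surj:
  assumes lin: "linear_on f N" and sub: "cvec.subspace N" and into: "f ` N \<subseteq> N"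
    and inj: "inj_on f N" and fin: "cdim N \<noteq> \<infinity>"
  shows "f ` N = N"
proof (rule ccontr)
  assume "f ` N \<noteq> N"
  then obtain x where x: "x \<in> N" "x \<notin> f ` N" using into by blast
  have eq: "cdim (f ` N) = cdim N" by (rule cdim_image_inj[OF lin sub inj])
  hence "cdim (f ` N) \<noteq> \<infinity>" using fin by simp
  then obtain B where B: "finite B" "B \<subseteq> f ` N" "cvec.independent B" "cdim (f ` N) = enat (card B)"
    using cdim_finite_basis by meson
  have "cvec.span B \<subseteq> f ` N" using B(2) subspace_image_linear_on[OF lin sub] by (rule cvec.span_minimal)
  hence "x \<notin> cvec.span B" using x by auto
  hence ind: "cvec.independent (insert x B)" using B(3) cvec.independent_insertI by blast
  have "x \<notin> B" using x B by auto
  have "enat (card (insert x B)) \<le> cdim N" using card_le_cdim[OF _ _ ind] B x into by auto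
  hence "enat (card B + 1) \<le> enat (card B)" using eq B \<open>x \<notin> B\<close> by simp
  thus False by simp
qed

lemma subspace_l2: "cvec.subspace l2"
  by (rule cvec.subspaceI) auto

lemma l2_sum: "(\<And>i. i \<in> F \<Longrightarrow> u i \<in> l2) \<Longrightarrow> (\<Sum>i\<in>F. cscale (c i) (u i)) \<in> l2"
  using subspace_l2 by (intro cvec.subspace_sum) (auto intro: cvec.subspace_scale)

lemma cinner_sum_left:
  assumes "\<And>i. i \<in> F \<Longrightarrow> u i \<in> l2" "g \<in> l2"
  shows "cinner (\<Sum>i\<in>F. cscale (c i) (u i)) g = (\<Sum>i\<in>F. cnj (c i) * cinner (u i) g)"
  using assms(1)
proof (induction F rule: infinite_finite_induct)
  case (infinite A)
  have "(\<Sum>i\<in>A. cscale (c i) (u i)) = 0" "(\<Sum>i\<in>A. cnj (c i) * cinner (u i) g) = 0"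
    using infinite.hyps by simp_all
  thus ?case by (metis cinner_zero_left)
next
  case empty thus ?case by (simp only: sum.empty cinner_zero_left)
next
  case (insert x F)
  have "cinner (\<Sum>i\<in>insert x F. cscale (c i) (u i)) g = cinner (cscale (c x) (u x) + (\<Sum>i\<in>F. cscale (c i) (u i))) g"
    by (simp only: sum.insert[OF insert.hyps])
  also have "\<dots> = cinner (cscale (c x) (u x)) g + cinner (\<Sum>i\<in>F. cscale (c i) (u i)) g"
    using insert.prems assms(2) by (intro cinner_add_left) (auto intro!: l2_sum)
  also have "\<dots> = cnj (c x) * cinner (u x) g + (\<Sum>i\<in>F. cnj (c i) * cinner (u i) g)"
    using insert by (simp add: cinner_cscale_left)
  finally show ?case by (simp only: sum.insert[OF insert.hyps])
qed

lemma cinner_sum_right: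
  assumes "\<And>i. i \<in> F \<Longrightarrow> u i \<in> l2" "g \<in> l2"
  shows "cinner g (\<Sum>i\<in>F. cscale (c i) (u i)) = (\<Sum>i\<in>F. c i * cinner g (u i))"
proof -
  have "cinner g (\<Sum>i\<in>F. cscale (c i) (u i)) = cnj (cinner (\<Sum>i\<in>F. cscale (c i) (u i)) g)" by (rule cinner_cnj)
  also have "\<dots> = cnj (\<Sum>i\<in>F. cnj (c i) * cinner (u i) g)" using cinner_sum_left[of F u g c] assms by simp
  also have "\<dots> = (\<Sum>i\<in>F. c i * cinner g (u i))" by (simp add: cinner_cnj[of g])
  finally show ?thesis .
qed

lemma enat_le_finite: "(x::enat) \<le> y \<Longrightarrow> y \<noteq> \<infinity> \<Longrightarrow> x \<noteq> \<infinity>"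
  by (cases x; cases y) auto

section \<open>Bounded operators and their adjoints\<close>

lemma bounded_op_closed: "bounded_op T \<Longrightarrow> f \<in> l2 \<Longrightarrow> T f \<in> l2"
  by (simp add: bounded_op_def)

lemma bounded_op_linear_on: fixes T :: "('i::countable \<Rightarrow> complex) \<Rightarrow> ('i \<Rightarrow> complex)"
  assumes "bounded_op T" shows "linear_on T l2"
proof -
  have L: "\<And>f g a b. f \<in> l2 \<Longrightarrow> g \<in> l2 \<Longrightarrow> T (\<lambda>i. a * f i + b * g i) = (\<lambda>i. a * T f i + b * T g i)"
    using assms by (simp add: bounded_op_def)
  show ?thesis unfolding linear_on_def
  proof (intro conjI ballI allI)
    fix x y :: "'i \<Rightarrow> complex" assume "x \<in> l2" "y \<in> l2"
    from L[OF this, of 1 1] show "T (x + y) = T x + T y" by (simp add: plus_fun_def)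
  next
    fix x :: "'i \<Rightarrow> complex" and c assume "x \<in> l2"
    from L[OF this this, of c 0] show "T (cscale c x) = cscale c (T x)" by (simp add: cscale_def)
  qed
qed

lemma bounded_op_bound: fixes T :: "('i::countable \<Rightarrow> complex) \<Rightarrow> ('i \<Rightarrow> complex)"
  assumes "bounded_op T" shows "\<exists>K\<ge>0. \<forall>f\<in>l2. l2norm (T f) \<le> K * l2norm f"
proof -
  obtain K where K: "\<forall>f\<in>l2. l2norm (T f) \<le> K * l2norm f" using assms by (auto simp: bounded_op_def)
  have "l2norm (T f) \<le> max K 0 * l2norm f" if "f \<in> l2" for f
  proof -
    have "l2norm (T f) \<le> K * l2norm f" using K that by blast
    also have "\<dots> \<le> max K 0 * l2norm f" by (intro mult_right_mono) auto
    finally show ?thesis .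
  qed
  thus ?thesis by (intro exI[of _ "max K 0"]) auto
qed

definition basis_vec :: "'i \<Rightarrow> 'i \<Rightarrow> complex" where
  "basis_vec i = (\<lambda>j. if j = i then 1 else 0)"

lemma basis_vec_l2: "basis_vec i \<in> (l2 :: ('i::countable \<Rightarrow> complex) set)"
  unfolding l2_def basis_vec_def
  by (auto intro!: finite_nonzero_values_imp_summable_on)

definition truncate :: "'i set \<Rightarrow> ('i \<Rightarrow> complex) \<Rightarrow> ('i \<Rightarrow> complex)" where
  "truncate F f = (\<lambda>j. if j \<in> F then f j else 0)"

lemma truncate_eq_sum: "finite F \<Longrightarrow> truncate F f = (\<Sum>i\<in>F. cscale (f i) (basis_vec i))"
  by (auto simp: truncate_def sum_fun_apply basis_vec_def fun_eq_iff if_distrib sum.If_cases cscale_apply)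

lemma truncate_l2: "finite F \<Longrightarrow> truncate F f \<in> (l2 :: ('i::countable \<Rightarrow> complex) set)"
  by (simp add: truncate_eq_sum l2_sum basis_vec_l2)

lemma infsum_truncate_sq:
  assumes "finite F"
  shows "(\<Sum>\<^sub>\<infinity>i. (cmod (truncate F f i))\<^sup>2) = (\<Sum>i\<in>F. (cmod (f i))\<^sup>2)"
proof -
  have "(\<Sum>\<^sub>\<infinity>i. (cmod (truncate F f i))\<^sup>2) = (\<Sum>\<^sub>\<infinity>i\<in>F. (cmod (f i))\<^sup>2)"
    by (rule infsum_cong_neutral) (auto simp: truncate_def)
  also have "\<dots> = (\<Sum>i\<in>F. (cmod (f i))\<^sup>2)" using assms by simp
  finally show ?thesis .
qed

lemma l2norm_truncate: "finite F \<Longrightarrow> (l2norm (truncate F f))\<^sup>2 = (\<Sum>i\<in>F. (cmod (f i))\<^sup>2)"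
  by (simp add: l2norm_sq infsum_truncate_sq)

lemma bounded_op_sum:
  assumes "bounded_op T" "\<And>i. i \<in> F \<Longrightarrow> u i \<in> l2"
  shows "T (\<Sum>i\<in>F. cscale (c i) (u i)) = (\<Sum>i\<in>F. cscale (c i) (T (u i)))"
  using linear_on_sum[OF bounded_op_linear_on[OF assms(1)] subspace_l2, of F u c] assms(2) by simp

text \<open>The coordinate formula \<open>(T\<^sup>* g)\<^sub>i = \<langle>T e\<^sub>i, g\<rangle>\<close> provides the witness for the choice
  in the definition of \<open>adj\<close>.\<close>

definition coord_adjoint :: "(('i::countable \<Rightarrow> complex) \<Rightarrow> ('i \<Rightarrow> complex)) \<Rightarrow> ('i \<Rightarrow> complex) \<Rightarrow> ('i \<Rightarrow> complex)" where
  "coord_adjoint T g = (\<lambda>i. cinner (T (basis_vec i)) g)"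

lemma cinner_truncate_coord_adjoint:
  fixes T :: "('i::countable \<Rightarrow> complex) \<Rightarrow> ('i \<Rightarrow> complex)"
  assumes T: "bounded_op T" and F: "finite F" and g: "g \<in> l2"
  shows "cinner (T (truncate F f)) g = (\<Sum>i\<in>F. cnj (f i) * coord_adjoint T g i)"
proof -
  have "T (truncate F f) = (\<Sum>i\<in>F. cscale (f i) (T (basis_vec i)))"
    using bounded_op_sum[OF T basis_vec_l2, where F=F and c=f] truncate_eq_sum[OF F] by simp
  hence "cinner (T (truncate F f)) g = (\<Sum>i\<in>F. cnj (f i) * cinner (T (basis_vec i)) g)"
    using cinner_sum_left[where F=F and c=f, OF bounded_op_closed[OF T basis_vec_l2] g] by simp
  thus ?thesis by (simp add: coord_adjoint_def)
qed

lemma coord_adjoint_l2: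
  fixes T :: "('i::countable \<Rightarrow> complex) \<Rightarrow> ('i \<Rightarrow> complex)"
  assumes T: "bounded_op T" and K: "K \<ge> 0" "\<forall>f\<in>l2. l2norm (T f) \<le> K * l2norm f" and g: "g \<in> l2"
  shows "coord_adjoint T g \<in> l2" "l2norm (coord_adjoint T g) \<le> K * l2norm g"
proof -
  let ?a = "coord_adjoint T g"
  have bound: "(\<Sum>i\<in>F. (cmod (?a i))\<^sup>2) \<le> (K * l2norm g)\<^sup>2" if F: "finite F" for F
  proof -
    define s where "s = (\<Sum>i\<in>F. (cmod (?a i))\<^sup>2)"
    have s0: "s \<ge> 0" unfolding s_def by (intro sum_nonneg) auto
    have "cinner (T (truncate F ?a)) g = (\<Sum>i\<in>F. cnj (?a i) * ?a i)"
      by (rule cinner_truncate_coord_adjoint[OF T F g])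
    also have "\<dots> = (\<Sum>i\<in>F. complex_of_real ((cmod (?a i))\<^sup>2))"
      by (rule sum.cong) (simp, metis complex_norm_square mult.commute)
    also have "\<dots> = complex_of_real s"
      unfolding s_def by (rule of_real_sum[symmetric])
    finally have eq: "cinner (T (truncate F ?a)) g = complex_of_real s" .
    have "s = cmod (cinner (T (truncate F ?a)) g)" using eq s0 by simp
    also have "\<dots> \<le> l2norm (T (truncate F ?a)) * l2norm g"
      by (rule cinner_cauchy_schwarz[OF bounded_op_closed[OF T truncate_l2[OF F]] g])
    also have "\<dots> \<le> K * l2norm (truncate F ?a) * l2norm g"
      using K truncate_l2[OF F] by (intro mult_right_mono) auto
    also have "l2norm (truncate F ?a) = sqrt s"
      using l2norm_truncate[OF F, of ?a] unfolding s_def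
      by (metis l2norm_nonneg real_sqrt_unique)
    finally have "s \<le> K * sqrt s * l2norm g" .
    hence "sqrt s * sqrt s \<le> sqrt s * (K * l2norm g)" using s0 by (simp add: mult_ac)
    hence "sqrt s \<le> K * l2norm g \<or> sqrt s = 0"
      by (metis mult_le_cancel_left real_sqrt_ge_zero s0 linorder_not_le order_less_le)
    hence "sqrt s \<le> K * l2norm g" using K by auto
    hence "(sqrt s)\<^sup>2 \<le> (K * l2norm g)\<^sup>2" using s0 by (intro power_mono) auto
    thus ?thesis using s0 by (simp add: s_def)
  qed
  show sm: "?a \<in> l2" unfolding l2_def
    by (auto intro!: nonneg_bdd_above_summable_on bdd_aboveI2[where M="(K * l2norm g)\<^sup>2"] bound)
  have "(l2norm ?a)\<^sup>2 \<le> (K * l2norm g)\<^sup>2"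
    unfolding l2norm_sq using sm unfolding l2_def
    by (intro infsum_le_finite_sums) (auto intro: bound)
  thus "l2norm ?a \<le> K * l2norm g" using K
    by (meson l2norm_nonneg mult_nonneg_nonneg power2_le_imp_le)
qed

lemma bounded_op_coord_adjoint: fixes T :: "('i::countable \<Rightarrow> complex) \<Rightarrow> ('i \<Rightarrow> complex)"
  assumes T: "bounded_op T" shows "bounded_op (coord_adjoint T)"
proof -
  obtain K where K: "K \<ge> 0" "\<forall>f\<in>l2. l2norm (T f) \<le> K * l2norm f" using bounded_op_bound[OF T] by auto
  show ?thesis unfolding bounded_op_def
  proof (intro conjI ballI allI exI)
    fix f :: "'i \<Rightarrow> complex" assume "f \<in> l2" thus "coord_adjoint T f \<in> l2" using coord_adjoint_l2[OF T K] by auto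
  next
    fix f g :: "'i \<Rightarrow> complex" and a b assume fg: "f \<in> l2" "g \<in> l2"
    have e: "(\<lambda>i. a * f i + b * g i) = cscale a f + cscale b g" by (auto simp: cscale_def)
    show "coord_adjoint T (\<lambda>i. a * f i + b * g i) = (\<lambda>i. a * coord_adjoint T f i + b * coord_adjoint T g i)"
      unfolding e coord_adjoint_def
    proof
      fix i
      have d: "T (basis_vec i) \<in> l2" by (rule bounded_op_closed[OF T basis_vec_l2])
      show "cinner (T (basis_vec i)) (cscale a f + cscale b g) = a * cinner (T (basis_vec i)) f + b * cinner (T (basis_vec i)) g"
        using cinner_add_right[OF d l2_cscale[OF fg(1)] l2_cscale[OF fg(2)]] by (simp add: cinner_cscale_right)
    qed
  next
    fix f :: "'i \<Rightarrow> complex" assume "f \<in> l2" thus "l2norm (coord_adjoint T f) \<le> K * l2norm f" using coord_adjoint_l2[OF T K] by auto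
  qed
qed

lemma l2norm_diff_truncate_sq:
  assumes f: "f \<in> l2" and F: "finite F"
  shows "(l2norm (f - truncate F f))\<^sup>2 = (\<Sum>\<^sub>\<infinity>i. (cmod (f i))\<^sup>2) - (\<Sum>i\<in>F. (cmod (f i))\<^sup>2)"
proof -
  have e: "(cmod ((f - truncate F f) i))\<^sup>2 = (cmod (f i))\<^sup>2 - (cmod (truncate F f i))\<^sup>2" for i
    by (auto simp: truncate_def)
  have s: "(\<lambda>i. - (cmod (truncate F f i))\<^sup>2) summable_on UNIV"
    using truncate_l2[OF F, of f] unfolding summable_on_uminus by (rule l2_summable)
  have "(\<Sum>\<^sub>\<infinity>i. (cmod (f i))\<^sup>2 - (cmod (truncate F f i))\<^sup>2)
      = (\<Sum>\<^sub>\<infinity>i. (cmod (f i))\<^sup>2) - (\<Sum>\<^sub>\<infinity>i. (cmod (truncate F f i))\<^sup>2)"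
    using infsum_add[OF l2_summable[OF f] s] infsum_uminus[of "\<lambda>i. (cmod (truncate F f i))\<^sup>2" UNIV]
    by simp
  thus ?thesis unfolding l2norm_sq e infsum_truncate_sq[OF F] .
qed

lemma tendsto_l2norm_diff_truncate:
  assumes f: "f \<in> l2"
  shows "((\<lambda>F. l2norm (f - truncate F f)) \<longlongrightarrow> 0) (finite_subsets_at_top UNIV)"
proof -
  let ?s = "\<Sum>\<^sub>\<infinity>i. (cmod (f i))\<^sup>2"
  have "((\<lambda>F. \<Sum>i\<in>F. (cmod (f i))\<^sup>2) \<longlongrightarrow> ?s) (finite_subsets_at_top UNIV)"
    using l2_summable[OF f] by (rule infsum_tendsto)
  hence "((\<lambda>F. sqrt (?s - (\<Sum>i\<in>F. (cmod (f i))\<^sup>2))) \<longlongrightarrow> sqrt (?s - ?s)) (finite_subsets_at_top UNIV)"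
    by (intro tendsto_intros)
  hence lim: "((\<lambda>F. sqrt (?s - (\<Sum>i\<in>F. (cmod (f i))\<^sup>2))) \<longlongrightarrow> 0) (finite_subsets_at_top UNIV)"
    by simp
  have ev: "\<forall>\<^sub>F F in finite_subsets_at_top UNIV.
      sqrt (?s - (\<Sum>i\<in>F. (cmod (f i))\<^sup>2)) = l2norm (f - truncate F f)"
    using l2norm_diff_truncate_sq[OF f]
    by (intro eventually_finite_subsets_at_top_weakI) (metis l2norm_nonneg real_sqrt_unique)
  from lim show ?thesis by (rule tendsto_cong[OF ev, THEN iffD1])
qed

lemma cinner_coord_adjoint:
  fixes T :: "('i::countable \<Rightarrow> complex) \<Rightarrow> ('i \<Rightarrow> complex)"
  assumes T: "bounded_op T" and f: "f \<in> l2" and g: "g \<in> l2"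
  shows "cinner (T f) g = cinner f (coord_adjoint T g)"
proof -
  obtain K where K: "K \<ge> 0" "\<forall>f\<in>l2. l2norm (T f) \<le> K * l2norm f" using bounded_op_bound[OF T] by auto
  let ?a = "coord_adjoint T g"
  let ?F = "finite_subsets_at_top (UNIV :: 'i set)"
  have a: "?a \<in> l2" using coord_adjoint_l2[OF T K g] by auto
  have lim1: "((\<lambda>F. \<Sum>i\<in>F. cnj (f i) * ?a i) \<longlongrightarrow> cinner f ?a) ?F"
    unfolding cinner_def using cinner_summable[OF f a] by (rule infsum_tendsto)
  have est: "cmod (cinner (T f) g - (\<Sum>i\<in>F. cnj (f i) * ?a i)) \<le> K * l2norm (f - truncate F f) * l2norm g"
    if F: "finite F" for F
  proof -
    have tl: "truncate F f \<in> l2" by (rule truncate_l2[OF F])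
    have "cinner (T f) g - (\<Sum>i\<in>F. cnj (f i) * ?a i) = cinner (T f - T (truncate F f)) g"
      using cinner_truncate_coord_adjoint[OF T F g] bounded_op_closed[OF T] f tl g
      by (simp add: cinner_diff_left)
    also have "T f - T (truncate F f) = T (f - truncate F f)"
      using linear_on_diff[OF bounded_op_linear_on[OF T] subspace_l2 f tl] by simp
    finally have "cmod (cinner (T f) g - (\<Sum>i\<in>F. cnj (f i) * ?a i)) = cmod (cinner (T (f - truncate F f)) g)"
      by simp
    also have "\<dots> \<le> l2norm (T (f - truncate F f)) * l2norm g"
      using f tl g by (intro cinner_cauchy_schwarz bounded_op_closed[OF T]) auto
    also have "\<dots> \<le> K * l2norm (f - truncate F f) * l2norm g"
      using K f tl by (intro mult_right_mono) auto
    finally show ?thesis .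
  qed
  have "((\<lambda>F. K * l2norm (f - truncate F f) * l2norm g) \<longlongrightarrow> K * 0 * l2norm g) ?F"
    by (intro tendsto_intros tendsto_l2norm_diff_truncate[OF f])
  hence "((\<lambda>F. K * l2norm (f - truncate F f) * l2norm g) \<longlongrightarrow> 0) ?F"
    by simp
  hence "((\<lambda>F. cinner (T f) g - (\<Sum>i\<in>F. cnj (f i) * ?a i)) \<longlongrightarrow> 0) ?F"
    by (rule Lim_null_comparison[rotated]) (auto intro!: eventually_finite_subsets_at_top_weakI est)
  hence "((\<lambda>F. cinner (T f) g - (cinner (T f) g - (\<Sum>i\<in>F. cnj (f i) * ?a i))) \<longlongrightarrow> cinner (T f) g - 0) ?F"
    by (intro tendsto_diff tendsto_const)
  hence lim2: "((\<lambda>F. \<Sum>i\<in>F. cnj (f i) * ?a i) \<longlongrightarrow> cinner (T f) g) ?F"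
    by simp
  show ?thesis using tendsto_unique[OF finite_subsets_at_top_neq_bot lim2 lim1] .
qed

lemma adj_is_adjoint:
  assumes T: "bounded_op T"
  shows "bounded_op (adj T) \<and> (\<forall>f\<in>l2. \<forall>g\<in>l2. cinner (T f) g = cinner f (adj T g))"
proof -
  have "\<exists>S. bounded_op S \<and> (\<forall>f\<in>l2. \<forall>g\<in>l2. cinner (T f) g = cinner f (S g))"
    using bounded_op_coord_adjoint[OF T] cinner_coord_adjoint[OF T] by blast
  thus ?thesis unfolding adj_def by (rule someI_ex)
qed

lemma bounded_op_adj: "bounded_op T \<Longrightarrow> bounded_op (adj T)"
  using adj_is_adjoint by blast

lemma cinner_adj: "bounded_op T \<Longrightarrow> f \<in> l2 \<Longrightarrow> g \<in> l2 \<Longrightarrow> cinner (T f) g = cinner f (adj T g)"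
  using adj_is_adjoint by blast

section \<open>Operators on \<open>l2\<close> and their rank\<close>

definition l2_op :: "(('i::countable \<Rightarrow> complex) \<Rightarrow> ('i \<Rightarrow> complex)) \<Rightarrow> bool" where
  "l2_op X \<longleftrightarrow> (\<forall>f\<in>l2. X f \<in> l2) \<and> linear_on X l2"

definition adjoint_pair :: "(('i::countable \<Rightarrow> complex) \<Rightarrow> ('i \<Rightarrow> complex)) \<Rightarrow> (('i \<Rightarrow> complex) \<Rightarrow> ('i \<Rightarrow> complex)) \<Rightarrow> bool" where
  "adjoint_pair X Y \<longleftrightarrow> (\<forall>f\<in>l2. \<forall>g\<in>l2. cinner (X f) g = cinner f (Y g))"

lemma l2_op_closed: "l2_op X \<Longrightarrow> f \<in> l2 \<Longrightarrow> X f \<in> l2"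
  by (simp add: l2_op_def)

lemma l2_op_linear_on: "l2_op X \<Longrightarrow> linear_on X l2"
  by (simp add: l2_op_def)

lemma bounded_op_l2_op: "bounded_op X \<Longrightarrow> l2_op X"
  by (simp add: l2_op_def bounded_op_closed bounded_op_linear_on)

lemma l2_op_comp: "l2_op X \<Longrightarrow> l2_op Y \<Longrightarrow> l2_op (\<lambda>f. X (Y f))"
  unfolding l2_op_def linear_on_def by auto

lemma l2_op_id: "l2_op (\<lambda>f. f)"
  unfolding l2_op_def linear_on_def by auto

lemma l2_op_diff: "l2_op X \<Longrightarrow> l2_op Y \<Longrightarrow> l2_op (\<lambda>f. X f - Y f)"
  unfolding l2_op_def linear_on_def
  by (auto simp: cscale_def fun_eq_iff algebra_simps intro!: l2_diff)

lemma l2_op_cscale: "l2_op (cscale c)"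
  unfolding l2_op_def linear_on_def using l2_cscale by (auto simp: cscale_def fun_eq_iff algebra_simps)

lemma l2_op_zero: "l2_op X \<Longrightarrow> X 0 = 0"
  using linear_on_zero[OF l2_op_linear_on subspace_l2] by blast

lemma l2_op_apply_diff: "l2_op X \<Longrightarrow> f \<in> l2 \<Longrightarrow> g \<in> l2 \<Longrightarrow> X (f - g) = X f - X g"
  using linear_on_diff[OF l2_op_linear_on subspace_l2] by blast

lemma l2_op_apply_add: "l2_op X \<Longrightarrow> f \<in> l2 \<Longrightarrow> g \<in> l2 \<Longrightarrow> X (f + g) = X f + X g"
  using linear_on_add[OF l2_op_linear_on] by blast

lemma l2_op_apply_uminus: "l2_op X \<Longrightarrow> f \<in> l2 \<Longrightarrow> X (- f) = - X f"
  using linear_on_uminus[OF l2_op_linear_on] by blast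

lemma adjoint_pair_sym: "adjoint_pair X Y \<Longrightarrow> adjoint_pair Y X"
  unfolding adjoint_pair_def by (metis cinner_cnj)

lemma adjoint_pair_comp:
  "adjoint_pair X X' \<Longrightarrow> adjoint_pair Y Y' \<Longrightarrow> l2_op Y \<Longrightarrow> l2_op X'
    \<Longrightarrow> adjoint_pair (\<lambda>f. X (Y f)) (\<lambda>f. Y' (X' f))"
  unfolding adjoint_pair_def by (simp add: l2_op_closed)

lemma adjoint_pair_diff:
  assumes "adjoint_pair X X'" "adjoint_pair Y Y'" "l2_op X" "l2_op Y" "l2_op X'" "l2_op Y'"
  shows "adjoint_pair (\<lambda>f. X f - Y f) (\<lambda>f. X' f - Y' f)"
  using assms unfolding adjoint_pair_def by (simp add: cinner_diff_left cinner_diff_right l2_op_closed)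

lemma adjoint_pair_id: "adjoint_pair (\<lambda>f. f) (\<lambda>f. f)"
  unfolding adjoint_pair_def by simp

lemma subspace_range: "l2_op X \<Longrightarrow> cvec.subspace (X ` l2)"
  by (rule subspace_image_linear_on[OF l2_op_linear_on subspace_l2])

lemma range_subset_l2: "l2_op X \<Longrightarrow> X ` l2 \<subseteq> l2"
  using l2_op_closed by blast

lemma selfadjoint_inj_on_range:
  assumes G: "l2_op G" "adjoint_pair G G"
  shows "inj_on G (G ` l2)"
proof (rule inj_onI)
  fix a b assume ab: "a \<in> G ` l2" "b \<in> G ` l2" "G a = G b"
  have sub: "cvec.subspace (G ` l2)" by (rule subspace_range[OF G(1)])
  have n: "a - b \<in> G ` l2" using ab cvec.subspace_diff[OF sub] by blast
  then obtain m where m: "m \<in> l2" "a - b = G m" by auto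
  have al2: "a \<in> l2" "b \<in> l2" using ab l2_op_closed[OF G(1)] by auto
  have "G (a - b) = 0" using ab l2_op_apply_diff[OF G(1) al2] by simp
  hence "cinner (a - b) (a - b) = 0"
    using G(2) m al2 unfolding adjoint_pair_def by (metis cinner_zero_right l2_diff)
  hence "a - b = 0" using al2 by (intro cinner_self_zero) auto
  thus "a = b" by simp
qed

lemma selfadjoint_finite_rank_range:
  assumes G: "l2_op G" "adjoint_pair G G" and fin: "cdim (G ` l2) \<noteq> \<infinity>" and x: "x \<in> l2"
  shows "\<exists>n\<in>G ` l2. G n = G x"
proof -
  let ?N = "G ` l2"
  have sub: "cvec.subspace ?N" by (rule subspace_range[OF G(1)])
  have lin: "linear_on G ?N" using l2_op_linear_on[OF G(1)] range_subset_l2[OF G(1)] by (rule linear_on_subset)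
  have into: "G ` ?N \<subseteq> ?N" using range_subset_l2[OF G(1)] by auto
  have "G ` ?N = ?N" by (rule inj_on_endo_imp_surj[OF lin sub into selfadjoint_inj_on_range[OF G] fin])
  moreover have "G x \<in> ?N" using x by auto
  ultimately show ?thesis by (metis imageE)
qed

lemma range_eq_image_gram_range:
  assumes S: "l2_op S" and S': "l2_op S'" and adj: "adjoint_pair S S'"
    and fin: "cdim ((\<lambda>f. S' (S f)) ` l2) \<noteq> \<infinity>"
  shows "S ` l2 = S ` ((\<lambda>f. S' (S f)) ` l2)"
proof -
  let ?G = "\<lambda>f. S' (S f)"
  have G: "l2_op ?G" using l2_op_comp[OF S' S] .
  have Gsa: "adjoint_pair ?G ?G" by (rule adjoint_pair_comp[OF adjoint_pair_sym[OF adj] adj S S])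
  show ?thesis
  proof
    show "S ` ?G ` l2 \<subseteq> S ` l2" using range_subset_l2[OF G] by auto
    show "S ` l2 \<subseteq> S ` ?G ` l2"
    proof
      fix y assume "y \<in> S ` l2"
      then obtain x where x: "x \<in> l2" "y = S x" by auto
      obtain n where n: "n \<in> ?G ` l2" "?G n = ?G x" using selfadjoint_finite_rank_range[OF G Gsa fin x(1)] by auto
      have nl2: "n \<in> l2" using n range_subset_l2[OF G] by auto
      have d: "x - n \<in> l2" using x nl2 by auto
      have "?G (x - n) = 0" using l2_op_apply_diff[OF G x(1) nl2] n by simp
      hence "cinner (S (x - n)) (S (x - n)) = 0"
        using adj d l2_op_closed[OF S d] unfolding adjoint_pair_def by (metis cinner_zero_right)
      hence "S (x - n) = 0" using l2_op_closed[OF S d] by (intro cinner_self_zero) auto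
      hence "S x = S n" using l2_op_apply_diff[OF S x(1) nl2] by simp
      thus "y \<in> S ` ?G ` l2" using x n by auto
    qed
  qed
qed

lemma rank_le_rank_gram:
  assumes S: "l2_op S" and S': "l2_op S'" and adj: "adjoint_pair S S'"
    and fin: "cdim ((\<lambda>f. S' (S f)) ` l2) \<noteq> \<infinity>"
  shows "cdim (S ` l2) \<le> cdim ((\<lambda>f. S' (S f)) ` l2)"
proof -
  let ?G = "\<lambda>f. S' (S f)"
  have G: "l2_op ?G" using l2_op_comp[OF S' S] .
  have "cdim (S ` l2) = cdim (S ` ?G ` l2)" using range_eq_image_gram_range[OF assms] by simp
  also have "\<dots> \<le> cdim (?G ` l2)"
    using linear_on_subset[OF l2_op_linear_on[OF S] range_subset_l2[OF G]] subspace_range[OF G]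
    by (rule cdim_image_le)
  finally show ?thesis .
qed

lemma rank_comp_le_right: "l2_op X \<Longrightarrow> l2_op Y \<Longrightarrow> cdim ((\<lambda>f. X (Y f)) ` l2) \<le> cdim (Y ` l2)"
proof -
  assume X: "l2_op X" and Y: "l2_op Y"
  have "(\<lambda>f. X (Y f)) ` l2 = X ` (Y ` l2)" by auto
  also have "cdim \<dots> \<le> cdim (Y ` l2)"
    using linear_on_subset[OF l2_op_linear_on[OF X] range_subset_l2[OF Y]] subspace_range[OF Y]
    by (rule cdim_image_le)
  finally show ?thesis .
qed

lemma rank_comp_le_left: "l2_op X \<Longrightarrow> l2_op Y \<Longrightarrow> cdim ((\<lambda>f. X (Y f)) ` l2) \<le> cdim (X ` l2)"
  by (intro cdim_mono) (auto simp: l2_op_closed)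

lemma rank_adjoint_pair_le:
  assumes S: "l2_op S" and S': "l2_op S'" and adj: "adjoint_pair S S'"
    and fin: "cdim (S' ` l2) \<noteq> \<infinity>"
  shows "cdim (S ` l2) \<le> cdim (S' ` l2)"
proof -
  have le: "cdim ((\<lambda>f. S' (S f)) ` l2) \<le> cdim (S' ` l2)" by (rule rank_comp_le_left[OF S' S])
  hence "cdim ((\<lambda>f. S' (S f)) ` l2) \<noteq> \<infinity>" using fin by (rule enat_le_finite)
  from rank_le_rank_gram[OF S S' adj this] le show ?thesis by simp
qed

lemma rank_adjoint_pair_eq:
  assumes S: "l2_op S" and S': "l2_op S'" and adj: "adjoint_pair S S'"
  shows "cdim (S ` l2) = cdim (S' ` l2)"
proof (cases "cdim (S ` l2) = \<infinity> \<or> cdim (S' ` l2) = \<infinity>")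
  case True
  thus ?thesis using rank_adjoint_pair_le[OF S S' adj] rank_adjoint_pair_le[OF S' S adjoint_pair_sym[OF adj]] by force
next
  case False
  thus ?thesis using rank_adjoint_pair_le[OF S S' adj] rank_adjoint_pair_le[OF S' S adjoint_pair_sym[OF adj]] by auto
qed

text \<open>Polarization: the norms of \<open>f + g\<close> and \<open>f + \<i>g\<close> determine \<open>cinner f g\<close>.\<close>

lemma isometry_cinner:
  fixes V :: "('i::countable \<Rightarrow> complex) \<Rightarrow> ('i \<Rightarrow> complex)"
  assumes V: "isometry V" and f: "f \<in> l2" and g: "g \<in> l2"
  shows "cinner (V f) (V g) = cinner f g"
proof -
  have B: "bounded_op V" using V by (simp add: isometry_def)
  have L: "l2_op V" by (rule bounded_op_l2_op[OF B])
  have nn: "cinner (V h) (V h) = cinner h h" if "h \<in> l2" for h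
    using V that by (simp add: isometry_def cinner_self)
  let ?z = "cinner (V f) (V g)" and ?w = "cinner f g"
  have Vf: "V f \<in> l2" "V g \<in> l2" using l2_op_closed[OF L] f g by auto
  have e1: "?z + cnj ?z = ?w + cnj ?w"
  proof -
    have "cinner (V (f + g)) (V (f + g)) = cinner (f + g) (f + g)" using nn f g by auto
    moreover have "V (f + g) = V f + V g" using l2_op_apply_add[OF L f g] .
    ultimately show ?thesis using cinner_add_add[OF Vf] cinner_add_add[OF f g] nn f g by simp
  qed
  have ig: "cscale \<i> g \<in> l2" using g by auto
  have e2: "\<i> * ?z + cnj (\<i> * ?z) = \<i> * ?w + cnj (\<i> * ?w)"
  proof -
    have "cinner (V (f + cscale \<i> g)) (V (f + cscale \<i> g)) = cinner (f + cscale \<i> g) (f + cscale \<i> g)" using nn f ig by auto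
    moreover have "V (f + cscale \<i> g) = V f + cscale \<i> (V g)"
      using l2_op_apply_add[OF L f ig] linear_on_cscale[OF l2_op_linear_on[OF L] g] by simp
    ultimately show ?thesis using cinner_add_add[OF Vf(1) l2_cscale[OF Vf(2)]] cinner_add_add[OF f ig] nn f g
      by (simp add: cinner_cscale_right cinner_cscale_left)
  qed
  show ?thesis using e1 e2 by (simp add: complex_eq_iff)
qed

lemma adj_isometry_cancel:
  fixes V :: "('i::countable \<Rightarrow> complex) \<Rightarrow> ('i \<Rightarrow> complex)"
  assumes V: "isometry V" and f: "f \<in> l2"
  shows "adj V (V f) = f"
proof -
  have B: "bounded_op V" using V by (simp add: isometry_def)
  show ?thesis
  proof (rule l2_eqI)
    show "adj V (V f) \<in> l2" using bounded_op_adj[OF B] B f by (simp add: bounded_op_closed)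
    show "f \<in> l2" by fact
    fix h :: "'i \<Rightarrow> complex" assume h: "h \<in> l2"
    have "cinner h (adj V (V f)) = cinner (V h) (V f)"
      using cinner_adj[OF B h bounded_op_closed[OF B f]] by simp
    also have "\<dots> = cinner h f" by (rule isometry_cinner[OF V h f])
    finally show "cinner h (adj V (V f)) = cinner h f" .
  qed
qed

section \<open>Pairs of orthogonal projections\<close>

definition orth_proj :: "(('i::countable \<Rightarrow> complex) \<Rightarrow> ('i \<Rightarrow> complex)) \<Rightarrow> bool" where
  "orth_proj X \<longleftrightarrow> l2_op X \<and> adjoint_pair X X \<and> (\<forall>f\<in>l2. X (X f) = X f)"

lemma orth_projD:
  assumes "orth_proj X"
  shows "l2_op X" "adjoint_pair X X" "f \<in> l2 \<Longrightarrow> X (X f) = X f"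
  using assms by (auto simp: orth_proj_def)

lemma orth_proj_complement:
  assumes "orth_proj X"
  shows "orth_proj (\<lambda>f. f - X f)"
  unfolding orth_proj_def
proof (intro conjI ballI)
  note X = orth_projD[OF assms]
  show "l2_op (\<lambda>f. f - X f)" by (rule l2_op_diff[OF l2_op_id X(1)])
  show "adjoint_pair (\<lambda>f. f - X f) (\<lambda>f. f - X f)"
    by (rule adjoint_pair_diff[OF adjoint_pair_id X(2) l2_op_id X(1) l2_op_id X(1)])
  fix f :: "'a \<Rightarrow> complex" assume "f \<in> l2"
  thus "f - X f - X (f - X f) = f - X f" using X by (simp add: l2_op_apply_diff l2_op_closed zero_fun_def)
qed

lemma orth_proj_diff_fixed_point:
  assumes X: "orth_proj X" and Y: "orth_proj Y" and z: "z \<in> l2" and e: "X z - Y z = z"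
  shows "Y z = 0 \<and> X z = z"
proof -
  note X = orth_projD[OF X] and Y = orth_projD[OF Y]
  have l: "X z \<in> l2" "Y z \<in> l2" using z l2_op_closed X(1) Y(1) by auto
  have "X (X z - Y z) = X z" using e by simp
  hence XY: "X (Y z) = 0" using l2_op_apply_diff[OF X(1) l] X(3)[OF z] by simp
  have "cinner (Y z) (Y z) = cinner (X z - Y z) (Y z)"
    using Y(2) z l e unfolding adjoint_pair_def by (metis Y(3))
  also have "\<dots> = cinner z (X (Y z)) - cinner (Y z) (Y z)"
    using X(2) z l unfolding adjoint_pair_def by (simp add: cinner_diff_left)
  finally have "cinner (Y z) (Y z) = 0" using XY by simp
  hence "Y z = 0" using l by (intro cinner_self_zero) auto
  thus ?thesis using e by simp
qed

lemma subspace_fixed_killed: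
  assumes X: "l2_op X" and Y: "l2_op Y"
  shows "cvec.subspace {z\<in>l2. X z = z \<and> Y z = 0}"
proof -
  have e: "{z\<in>l2. X z = z \<and> Y z = 0} = {z\<in>l2. X z - z = 0} \<inter> {z\<in>l2. Y z = 0}"
    by auto
  show ?thesis unfolding e
    by (intro cvec.subspace_inter subspace_kernel_linear_on subspace_l2 l2_op_linear_on
        l2_op_diff[OF X l2_op_id] Y)
qed

lemma proj_comp_image_inter_fixed_killed:
  assumes X: "orth_proj X" and Y: "orth_proj Y" and U: "U \<subseteq> l2"
  shows "X ` Y ` U \<inter> {z\<in>l2. X z = z \<and> Y z = 0} \<subseteq> {0}"
proof
  note X = orth_projD[OF X] and Y = orth_projD[OF Y]
  fix z assume "z \<in> X ` Y ` U \<inter> {z\<in>l2. X z = z \<and> Y z = 0}"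
  then obtain u where u: "u \<in> l2" "z = X (Y u)" and z: "z \<in> l2" "X z = z" "Y z = 0"
    using U by auto
  have "cinner z z = cinner (Y u) (X z)"
    using X(2) z l2_op_closed[OF Y(1) u(1)] u(2) unfolding adjoint_pair_def by metis
  also have "\<dots> = cinner u (Y z)"
    using Y(2) z u unfolding adjoint_pair_def by simp
  finally have "cinner z z = 0" using z by simp
  thus "z \<in> {0}" using z cinner_self_zero by auto
qed

lemma proj_dim_ineq:
  assumes X: "orth_proj X" and Y: "orth_proj Y"
    and M: "cvec.subspace M" "M \<subseteq> l2" "X ` M \<subseteq> M" "Y ` M \<subseteq> M"
    and F1: "{z\<in>l2. X z = z \<and> Y z = 0} \<subseteq> M"
  shows "cdim (Y ` M) + cdim {z\<in>l2. X z = z \<and> Y z = 0} \<le> cdim (X ` M) + cdim {z\<in>l2. X z = 0 \<and> Y z = z}"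
proof -
  let ?F1 = "{z\<in>l2. X z = z \<and> Y z = 0}" and ?F2 = "{z\<in>l2. X z = 0 \<and> Y z = z}"
  let ?RM = "Y ` M"
  have RMM: "?RM \<subseteq> M" using M by auto
  have linX: "linear_on X ?RM" and linY: "linear_on Y M"
    using l2_op_linear_on orth_projD(1) X Y M(2) RMM by (blast intro: linear_on_subset)+
  have RMsub: "cvec.subspace ?RM" by (rule subspace_image_linear_on[OF linY M(1)])
  have ker: "{y\<in>?RM. X y = 0} \<subseteq> ?F2"
    using M(2) orth_projD(3)[OF Y] l2_op_closed[OF orth_projD(1)[OF Y]] by auto
  have "cdim ?RM \<le> cdim (X ` ?RM) + cdim {y\<in>?RM. X y = 0}"
    by (rule cdim_le_image_plus_kernel[OF linX RMsub])
  also have "\<dots> \<le> cdim (X ` ?RM) + cdim ?F2"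
    using ker by (intro add_left_mono cdim_mono)
  finally have "cdim ?RM + cdim ?F1 \<le> (cdim (X ` ?RM) + cdim ?F1) + cdim ?F2"
    by (simp add: add_right_mono ac_simps)
  moreover have "cdim (X ` ?RM) + cdim ?F1 \<le> cdim (X ` M)"
  proof (rule cdim_add_le_of_disjoint)
    show "cvec.subspace (X ` ?RM)" by (rule subspace_image_linear_on[OF linX RMsub])
    show "cvec.subspace ?F1" by (rule subspace_fixed_killed[OF orth_projD(1)[OF X] orth_projD(1)[OF Y]])
    show "X ` ?RM \<subseteq> X ` M" using RMM by auto
    show "?F1 \<subseteq> X ` M" using F1 by (auto intro: rev_image_eqI)
    show "X ` ?RM \<inter> ?F1 \<subseteq> {0}"
      by (rule proj_comp_image_inter_fixed_killed[OF X Y M(2)])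
  qed
  ultimately show ?thesis by (meson add_right_mono order_trans)
qed

locale projection_pair =
  fixes P R :: "('i::countable \<Rightarrow> complex) \<Rightarrow> ('i \<Rightarrow> complex)"
  assumes P: "orth_proj P" and R: "orth_proj R"
begin

lemmas P_op = orth_projD(1)[OF P] and R_op = orth_projD(1)[OF R]
lemmas P_selfadjoint = orth_projD(2)[OF P] and R_selfadjoint = orth_projD(2)[OF R]
lemmas P_idem[simp] = orth_projD(3)[OF P] and R_idem[simp] = orth_projD(3)[OF R]

lemmas P_R_linear[simp] =
  l2_op_closed[OF P_op] l2_op_closed[OF R_op] l2_op_apply_diff[OF P_op] l2_op_apply_diff[OF R_op]
  l2_op_apply_add[OF P_op] l2_op_apply_add[OF R_op] l2_op_apply_uminus[OF P_op] l2_op_apply_uminus[OF R_op]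

lemmas [simp] = l2_diff l2_add l2_uminus

definition C where "C f = P f - R f"
definition Q where "Q f = R f - P (R f)"
definition E1 where "E1 = {f\<in>l2. C f = f}"
definition Em1 where "Em1 = {f\<in>l2. C f = - f}"

lemma C_op: "l2_op C"
  unfolding C_def[abs_def] by (rule l2_op_diff[OF P_op R_op])

lemma Q_op: "l2_op Q"
  unfolding Q_def[abs_def] by (rule l2_op_diff[OF R_op l2_op_comp[OF P_op R_op]])

lemmas C_linear[simp] = l2_op_closed[OF C_op] l2_op_apply_diff[OF C_op]

lemma C_selfadjoint: "adjoint_pair C C"
  unfolding C_def[abs_def] by (rule adjoint_pair_diff[OF P_selfadjoint R_selfadjoint P_op R_op P_op R_op])

lemma E1_char: "E1 = {z\<in>l2. P z = z \<and> R z = 0}"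
  using orth_proj_diff_fixed_point[OF P R] by (auto simp: E1_def C_def)

lemma Em1_char: "Em1 = {z\<in>l2. R z = z \<and> P z = 0}"
proof -
  have "P z - R z = - z \<longleftrightarrow> R z - P z = z" for z :: "'i \<Rightarrow> complex"
    by (metis minus_diff_eq minus_minus)
  thus ?thesis using orth_proj_diff_fixed_point[OF R P] by (auto simp: Em1_def C_def)
qed

text \<open>\<open>M = ran C\<^sup>2\<close> reduces \<open>P\<close> and \<open>R\<close>, and \<open>C\<close> is injective on it; when \<open>C\<close> has finite
  rank, \<open>M\<close> is finite-dimensional and carries the whole range of \<open>C\<close>.\<close>

definition G where "G f = C (C f)"
definition M where "M = G ` l2"

lemma G_op: "l2_op G" unfolding G_def[abs_def] by (rule l2_op_comp[OF C_op C_op])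

lemma G_selfadjoint: "adjoint_pair G G"
  unfolding G_def[abs_def] by (rule adjoint_pair_comp[OF C_selfadjoint C_selfadjoint C_op C_op])

lemma G_expand: "f \<in> l2 \<Longrightarrow> G f = P f - P (R f) - R (P f) + R f"
  by (simp add: G_def C_def algebra_simps)

lemma P_G_commute: "f \<in> l2 \<Longrightarrow> P (G f) = G (P f)"
  by (simp add: G_expand algebra_simps)

lemma R_G_commute: "f \<in> l2 \<Longrightarrow> R (G f) = G (R f)"
  by (simp add: G_expand algebra_simps)

lemma subspace_M: "cvec.subspace M" unfolding M_def by (rule subspace_range[OF G_op])

lemma M_subset_l2: "M \<subseteq> l2" unfolding M_def by (rule range_subset_l2[OF G_op])

lemma P_image_M_subset: "P ` M \<subseteq> M" unfolding M_def using P_G_commute by (auto intro!: imageI)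

lemma R_image_M_subset: "R ` M \<subseteq> M" unfolding M_def using R_G_commute by (auto intro!: imageI)

lemma cdim_M_le_rank_C: "cdim M \<le> cdim (C ` l2)"
  unfolding M_def G_def[abs_def] by (intro cdim_mono) auto

lemma inj_on_C_M: "inj_on C M"
proof (rule inj_onI)
  fix a b assume ab: "a \<in> M" "b \<in> M" "C a = C b"
  hence "G a = G b" by (simp add: G_def)
  thus "a = b" using selfadjoint_inj_on_range[OF G_op G_selfadjoint] ab unfolding M_def by (meson inj_onD)
qed

lemma C_eq_0_on_M: "m \<in> M \<Longrightarrow> C m = 0 \<Longrightarrow> m = 0"
  using inj_on_C_M cvec.subspace_0[OF subspace_M] l2_op_zero[OF C_op] by (metis inj_onD)

lemma E1_subset_M: "E1 \<subseteq> M"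
  unfolding M_def by (auto simp: E1_def G_def intro: rev_image_eqI)

lemma Em1_subset_M: "Em1 \<subseteq> M"
  unfolding M_def by (auto simp: Em1_def G_def l2_op_apply_uminus[OF C_op] intro: rev_image_eqI)

lemma subspace_R_image_M: "cvec.subspace (R ` M)"
  by (rule subspace_image_linear_on[OF linear_on_subset[OF l2_op_linear_on[OF R_op] M_subset_l2] subspace_M])

lemma complement_P_op: "l2_op (\<lambda>y. y - P y)"
  by (rule l2_op_diff[OF l2_op_id P_op])

lemma inj_on_complement_P: "inj_on (\<lambda>y. y - P y) (R ` M)"
proof (rule inj_onI)
  fix a b assume ab: "a \<in> R ` M" "b \<in> R ` M" "a - P a = b - P b"
  have d: "a - b \<in> R ` M" using ab cvec.subspace_diff[OF subspace_R_image_M] by blast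
  then obtain m where m: "m \<in> M" "a - b = R m" by auto
  have "a \<in> l2" "b \<in> l2" "m \<in> l2" using ab m R_image_M_subset M_subset_l2 by auto
  hence "C (a - b) = 0" using ab m by (simp add: C_def algebra_simps)
  moreover have "a - b \<in> M" using d R_image_M_subset by auto
  ultimately show "a = b" using C_eq_0_on_M[of "a - b"] by simp
qed

lemma cdim_complement_P_R_image_M: "cdim ((\<lambda>y. y - P y) ` (R ` M)) = cdim (R ` M)"
  by (rule cdim_image_inj[OF linear_on_subset[OF l2_op_linear_on[OF complement_P_op]]
        subspace_R_image_M inj_on_complement_P])
     (use R_image_M_subset M_subset_l2 in auto)

definition M0 where "M0 = {x\<in>M. P x = 0}"

lemma subspace_M0: "cvec.subspace M0"
  unfolding M0_def
  by (rule subspace_kernel_linear_on[OF linear_on_subset[OF l2_op_linear_on[OF P_op] M_subset_l2] subspace_M])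

lemma inj_on_R_M0: "inj_on R M0"
proof (rule inj_onI)
  fix a b assume ab: "a \<in> M0" "b \<in> M0" "R a = R b"
  have "a - b \<in> M0" using ab cvec.subspace_diff[OF subspace_M0] by blast
  moreover have "a \<in> l2" "b \<in> l2" using ab M_subset_l2 by (auto simp: M0_def)
  ultimately have "C (a - b) = 0" "a - b \<in> M" using ab by (simp_all add: C_def M0_def)
  thus "a = b" using C_eq_0_on_M[of "a - b"] by simp
qed

lemma complement_P_R_image_M_subset_M0: "(\<lambda>y. y - P y) ` (R ` M) \<subseteq> M0"
proof
  fix z assume "z \<in> (\<lambda>y. y - P y) ` (R ` M)"
  then obtain y where y: "y \<in> M" "z = y - P y" using R_image_M_subset by auto
  have "y \<in> l2" "P y \<in> M" using y M_subset_l2 P_image_M_subset by auto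
  thus "z \<in> M0" using y cvec.subspace_diff[OF subspace_M] by (simp add: M0_def)
qed

lemma cdim_M0_eq: "cdim M0 = cdim (R ` M)"
proof (rule antisym)
  have "cdim M0 = cdim (R ` M0)"
    by (rule cdim_image_inj[OF linear_on_subset[OF l2_op_linear_on[OF R_op]] subspace_M0 inj_on_R_M0, symmetric])
       (use M_subset_l2 in \<open>auto simp: M0_def\<close>)
  also have "\<dots> \<le> cdim (R ` M)" by (intro cdim_mono) (auto simp: M0_def)
  finally show "cdim M0 \<le> cdim (R ` M)" .
  show "cdim (R ` M) \<le> cdim M0"
    using cdim_mono[OF complement_P_R_image_M_subset_M0] cdim_complement_P_R_image_M by simp
qed

lemma cdim_M_split: "cdim M = cdim (P ` M) + cdim M0"
proof (rule antisym)
  have linP: "linear_on P M" using l2_op_linear_on[OF P_op] M_subset_l2 by (rule linear_on_subset)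
  show "cdim M \<le> cdim (P ` M) + cdim M0"
    using cdim_le_image_plus_kernel[OF linP subspace_M] unfolding M0_def .
  show "cdim (P ` M) + cdim M0 \<le> cdim M"
  proof (rule cdim_add_le_of_disjoint)
    show "cvec.subspace (P ` M)" by (rule subspace_image_linear_on[OF linP subspace_M])
    show "P ` M \<inter> M0 \<subseteq> {0}" using M_subset_l2 by (auto simp: M0_def)
  qed (use subspace_M0 P_image_M_subset in \<open>auto simp: M0_def\<close>)
qed

lemma cdim_balance:
  "cdim (R ` M) + cdim E1 \<le> cdim (P ` M) + cdim Em1"
  "cdim (P ` M) + cdim Em1 \<le> cdim (R ` M) + cdim E1"
proof -
  have E1_eq: "E1 = {z\<in>l2. R z = 0 \<and> P z = z}" and Em1_eq: "Em1 = {z\<in>l2. P z = 0 \<and> R z = z}"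
    using E1_char Em1_char by auto
  show "cdim (R ` M) + cdim E1 \<le> cdim (P ` M) + cdim Em1"
    using proj_dim_ineq[OF P R subspace_M M_subset_l2 P_image_M_subset R_image_M_subset] E1_subset_M
    unfolding E1_char Em1_eq by blast
  show "cdim (P ` M) + cdim Em1 \<le> cdim (R ` M) + cdim E1"
    using proj_dim_ineq[OF R P subspace_M M_subset_l2 R_image_M_subset P_image_M_subset] Em1_subset_M
    unfolding E1_eq Em1_char by blast
qed

context
  assumes rank_C_finite: "cdim (C ` l2) \<noteq> \<infinity>"
begin

lemma cdim_M_finite: "cdim M \<noteq> \<infinity>"
  using enat_le_finite[OF cdim_M_le_rank_C rank_C_finite] .

lemma range_C_eq_image_M: "C ` l2 = C ` M"
  using range_eq_image_gram_range[OF C_op C_op C_selfadjoint] cdim_M_finite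
  unfolding M_def G_def[abs_def] by blast

lemma rank_C_eq_cdim_M: "cdim (C ` l2) = cdim M"
proof -
  have "cdim (C ` M) = cdim M"
    by (rule cdim_image_inj[OF linear_on_subset[OF l2_op_linear_on[OF C_op] M_subset_l2] subspace_M inj_on_C_M])
  thus ?thesis using range_C_eq_image_M by simp
qed

lemma range_Q_eq: "Q ` l2 = (\<lambda>y. y - P y) ` (R ` M)"
proof
  show "(\<lambda>y. y - P y) ` R ` M \<subseteq> Q ` l2"
    using M_subset_l2 by (auto simp: Q_def intro!: imageI)
  show "Q ` l2 \<subseteq> (\<lambda>y. y - P y) ` R ` M"
  proof
    fix y assume "y \<in> Q ` l2"
    then obtain x where x: "x \<in> l2" "y = Q x" by auto
    obtain m where m: "m \<in> M" "C x = C m" using range_C_eq_image_M x by (metis imageE imageI)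
    have ml: "m \<in> l2" using m M_subset_l2 by auto
    have "C (x - m) = 0" using m x ml by simp
    hence "P (x - m) = R (x - m)" by (simp add: C_def)
    hence "Q (x - m) = 0" using P_idem[of "x - m"] x ml by (simp only: Q_def diff_self) simp
    hence "Q x = Q m" using l2_op_apply_diff[OF Q_op x(1) ml] by simp
    thus "y \<in> (\<lambda>y. y - P y) ` R ` M" using x m by (auto simp: Q_def)
  qed
qed

lemma rank_Q_eq_cdim_R_image_M: "cdim (Q ` l2) = cdim (R ` M)"
  unfolding range_Q_eq by (rule cdim_complement_P_R_image_M)

lemma rank_C_formula_finite:
  assumes f1: "cdim E1 \<noteq> \<infinity>" and f2: "cdim Em1 \<noteq> \<infinity>"
  shows "ereal_of_enat (cdim (C ` l2))
     = 2 * ereal_of_enat (cdim (Q ` l2)) + ereal_of_enat (cdim E1) - ereal_of_enat (cdim Em1)"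
proof -
  have "cdim (P ` M) \<noteq> \<infinity>" "cdim (R ` M) \<noteq> \<infinity>"
    using enat_le_finite[OF cdim_mono cdim_M_finite] P_image_M_subset R_image_M_subset by auto
  moreover note f1 f2
  ultimately obtain a b d1 d2 where a: "cdim (P ` M) = enat a" and b: "cdim (R ` M) = enat b"
    and d1: "cdim E1 = enat d1" and d2: "cdim Em1 = enat d2"
    by (auto simp: not_infinity_eq)
  have "a + d2 = b + d1" using cdim_balance a b d1 d2 by simp
  moreover have "cdim (C ` l2) = enat (a + b)" using rank_C_eq_cdim_M cdim_M_split cdim_M0_eq a b by simp
  moreover have "cdim (Q ` l2) = enat b" using rank_Q_eq_cdim_R_image_M b by simp
  ultimately show ?thesis using d1 d2 by (simp add: ereal_of_enat_def)
qed

end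

context
  assumes rank_Q_finite: "cdim (Q ` l2) \<noteq> \<infinity>" and E1_finite: "cdim E1 \<noteq> \<infinity>"
begin

text \<open>\<open>RP\<close> intertwines \<open>P(I - R)P\<close> with the finite-rank \<open>R(I - P)R\<close>, and its kernel on the
  range of \<open>P(I - R)P\<close> lies in \<open>E1\<close>.\<close>

lemma rank_P_complement_R_P_finite: "cdim ((\<lambda>f. P f - P (R (P f))) ` l2) \<noteq> \<infinity>"
proof -
  let ?G1 = "\<lambda>f. P f - P (R (P f))" and ?Z = "\<lambda>f. R (P f)" and ?G2 = "\<lambda>f. R (Q f - P (Q f))"
  have G1: "l2_op ?G1" by (rule l2_op_diff[OF P_op l2_op_comp[OF P_op l2_op_comp[OF R_op P_op]]])
  have Z: "l2_op ?Z" by (rule l2_op_comp[OF R_op P_op])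
  have G2: "cdim (?G2 ` l2) \<noteq> \<infinity>"
    using enat_le_finite[OF rank_comp_le_right[OF l2_op_comp[OF R_op complement_P_op] Q_op] rank_Q_finite] .
  have image: "?Z ` ?G1 ` l2 \<subseteq> ?G2 ` l2"
  proof
    fix y assume "y \<in> ?Z ` ?G1 ` l2"
    then obtain x where x: "x \<in> l2" "y = ?Z (?G1 x)" by auto
    have "?Z (?G1 x) = ?G2 (?Z x)" using x by (simp add: Q_def algebra_simps)
    thus "y \<in> ?G2 ` l2" using x by auto
  qed
  have kernel: "{y\<in>?G1 ` l2. ?Z y = 0} \<subseteq> E1"
    unfolding E1_char by auto
  have "cdim (?G1 ` l2) \<le> cdim (?Z ` ?G1 ` l2) + cdim {y\<in>?G1 ` l2. ?Z y = 0}"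
    by (rule cdim_le_image_plus_kernel[OF linear_on_subset[OF l2_op_linear_on[OF Z] range_subset_l2[OF G1]]
          subspace_range[OF G1]])
  also have "\<dots> \<le> cdim (?G2 ` l2) + cdim E1"
    by (intro add_mono cdim_mono image kernel)
  finally have "cdim (?G1 ` l2) \<le> cdim (?G2 ` l2) + cdim E1" .
  moreover have "cdim (?G2 ` l2) + cdim E1 \<noteq> \<infinity>" using G2 E1_finite by (simp add: plus_eq_infty_iff_enat)
  ultimately show ?thesis by (rule enat_le_finite)
qed

lemma rank_P_complement_R_finite: "cdim ((\<lambda>f. P (f - R f)) ` l2) \<noteq> \<infinity>"
proof -
  note DR = orth_projD[OF orth_proj_complement[OF R]]
  let ?S = "\<lambda>f. P f - R (P f)" and ?S' = "\<lambda>f. P (f - R f)"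
  have S: "l2_op ?S" by (rule l2_op_comp[OF DR(1) P_op])
  have S': "l2_op ?S'" by (rule l2_op_comp[OF P_op DR(1)])
  have adj: "adjoint_pair ?S ?S'" by (rule adjoint_pair_comp[OF DR(2) P_selfadjoint P_op DR(1)])
  have gram: "(\<lambda>f. ?S' (?S f)) ` l2 = (\<lambda>f. P f - P (R (P f))) ` l2"
    by (rule image_cong) (auto simp: algebra_simps)
  have "cdim (?S ` l2) \<noteq> \<infinity>"
    using rank_le_rank_gram[OF S S' adj] rank_P_complement_R_P_finite gram enat_le_finite by simp
  thus ?thesis
    using enat_le_finite[OF rank_adjoint_pair_le[OF S' S adjoint_pair_sym[OF adj]]] by blast
qed

end

lemma rank_Q_infinite:
  assumes infC: "cdim (C ` l2) = \<infinity>" and f1: "cdim E1 \<noteq> \<infinity>"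
  shows "cdim (Q ` l2) = \<infinity>"
proof (rule ccontr)
  assume finQ: "cdim (Q ` l2) \<noteq> \<infinity>"
  let ?S' = "\<lambda>f. P (f - R f)"
  have decomp: "C ` l2 \<subseteq> {a + b | a b. a \<in> ?S' ` l2 \<and> b \<in> Q ` l2}"
  proof
    fix y assume "y \<in> C ` l2"
    then obtain x where x: "x \<in> l2" "y = C x" by auto
    have "C x = ?S' x + Q (- x)" using x by (simp add: C_def Q_def algebra_simps)
    thus "y \<in> {a + b | a b. a \<in> ?S' ` l2 \<and> b \<in> Q ` l2}" using x by blast
  qed
  have "cdim (C ` l2) \<le> cdim (?S' ` l2) + cdim (Q ` l2)"
    by (rule order_trans[OF cdim_mono[OF decomp] cdim_set_plus_le])
  thus False using infC finQ rank_P_complement_R_finite[OF finQ f1] by (simp add: plus_eq_infty_iff_enat)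
qed

theorem rank_C_formula:
  assumes f1: "cdim E1 \<noteq> \<infinity>" and f2: "cdim Em1 \<noteq> \<infinity>"
  shows "ereal_of_enat (cdim (C ` l2))
     = 2 * ereal_of_enat (cdim (Q ` l2)) + ereal_of_enat (cdim E1) - ereal_of_enat (cdim Em1)"
proof (cases "cdim (C ` l2) = \<infinity>")
  case True
  hence "cdim (Q ` l2) = \<infinity>" using rank_Q_infinite f1 by blast
  thus ?thesis using True f1 f2 by (cases "cdim E1"; cases "cdim Em1") auto
next
  case False
  thus ?thesis using rank_C_formula_finite f1 f2 by blast
qed

end

section \<open>Eigenspaces of compact operators\<close>

definition orthonormal :: "('i::countable \<Rightarrow> complex) set \<Rightarrow> bool" where
  "orthonormal W \<longleftrightarrow> (\<forall>u\<in>W. cinner u u = 1) \<and> (\<forall>u\<in>W. \<forall>w\<in>W. u \<noteq> w \<longrightarrow> cinner u w = 0)"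

lemma cinner_orthonormal_residual:
  assumes W: "finite W" "W \<subseteq> l2" "orthonormal W" and x: "x \<in> l2" and w: "w \<in> W"
  shows "cinner w (x - (\<Sum>u\<in>W. cscale (cinner u x) u)) = 0"
proof -
  have "cinner w (\<Sum>u\<in>W. cscale (cinner u x) u) = (\<Sum>u\<in>W. cinner u x * cinner w u)"
    using cinner_sum_right[of W "\<lambda>u. u" w "\<lambda>u. cinner u x"] W w by auto
  also have "\<dots> = (\<Sum>u\<in>W. if u = w then cinner w x else 0)"
    using W(3) w unfolding orthonormal_def by (intro sum.cong) auto
  also have "\<dots> = cinner w x" using W(1) w by simp
  moreover have "(\<Sum>u\<in>W. cscale (cinner u x) u) \<in> l2" using W by (intro l2_sum) auto
  ultimately show ?thesis using W x w by (auto simp: cinner_diff_right)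
qed

lemma cinner_normalize:
  assumes y: "y \<in> l2" "y \<noteq> 0"
  shows "cinner (cscale (of_real (1 / l2norm y)) y) (cscale (of_real (1 / l2norm y)) y) = 1"
proof -
  let ?n = "l2norm y"
  have n: "?n \<noteq> 0" using y l2norm_zero_iff by blast
  have "cinner (cscale (of_real (1 / ?n)) y) (cscale (of_real (1 / ?n)) y)
      = of_real (1 / ?n) * (cnj (of_real (1 / ?n)) * cinner y y)"
    by (simp only: cinner_cscale_left cinner_cscale_right)
  also have "\<dots> = of_real ((1 / ?n) * ((1 / ?n) * ?n\<^sup>2))" by (simp add: cinner_self)
  also have "(1 / ?n) * ((1 / ?n) * ?n\<^sup>2) = 1" using n by (simp add: power2_eq_square)
  finally show ?thesis by simp
qed

lemma orthonormal_extend: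
  assumes E: "cvec.subspace E" "E \<subseteq> l2" and inf: "cdim E = \<infinity>"
    and W: "finite W" "W \<subseteq> E" "orthonormal W"
  shows "\<exists>v\<in>E. cinner v v = 1 \<and> (\<forall>u\<in>W. cinner u v = 0)"
proof -
  have "\<not> E \<subseteq> cvec.span W" using cdim_finite_iff_span[of E] inf W(1) by auto
  then obtain x where x: "x \<in> E" "x \<notin> cvec.span W" by auto
  define p where "p = (\<Sum>u\<in>W. cscale (cinner u x) u)"
  define y where "y = x - p"
  have "p \<in> E" unfolding p_def using W E by (intro cvec.subspace_sum) (auto intro: cvec.subspace_scale)
  hence yE: "y \<in> E" unfolding y_def using x cvec.subspace_diff[OF E(1)] by auto
  have "p \<in> cvec.span W" unfolding p_def by (intro cvec.span_sum cvec.span_scale cvec.span_base)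
  hence y0: "y \<noteq> 0" using x by (auto simp: y_def)
  define v where "v = cscale (of_real (1 / l2norm y)) y"
  have "v \<in> E" unfolding v_def by (rule cvec.subspace_scale[OF E(1) yE])
  moreover have "cinner v v = 1" unfolding v_def using yE E y0 by (intro cinner_normalize) auto
  moreover have "\<forall>u\<in>W. cinner u v = 0"
    using cinner_orthonormal_residual[OF W(1) _ W(3)] W E x
    unfolding v_def y_def p_def by (auto simp: cinner_cscale_right)
  ultimately show ?thesis by blast
qed

fun orthonormal_list :: "('i::countable \<Rightarrow> complex) set \<Rightarrow> nat \<Rightarrow> ('i \<Rightarrow> complex) list" where
  "orthonormal_list E 0 = []"
| "orthonormal_list E (Suc n) = orthonormal_list E n @ [SOME v. v \<in> E \<and> cinner v v = 1 \<and> (\<forall>u\<in>set (orthonormal_list E n). cinner u v = 0)]"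

lemma length_orthonormal_list: "length (orthonormal_list E n) = n"
  by (induction n) auto

lemma orthonormal_list_nth: "m \<le> n \<Longrightarrow> k < m \<Longrightarrow> orthonormal_list E n ! k = orthonormal_list E m ! k"
proof (induction n)
  case 0 thus ?case by simp
next
  case (Suc n)
  show ?case
  proof (cases "m = Suc n")
    case True thus ?thesis by simp
  next
    case False
    hence "m \<le> n" using Suc by simp
    thus ?thesis using Suc length_orthonormal_list[of E n] by (simp add: nth_append)
  qed
qed

lemma orthonormal_list_props:
  assumes E: "cvec.subspace E" "E \<subseteq> l2" and inf: "cdim E = \<infinity>"
  shows "set (orthonormal_list E n) \<subseteq> E \<and> orthonormal (set (orthonormal_list E n)) \<and> distinct (orthonormal_list E n)"
proof (induction n)
  case 0 thus ?case by (simp add: orthonormal_def)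
next
  case (Suc n)
  let ?P = "\<lambda>v. v \<in> E \<and> cinner v v = 1 \<and> (\<forall>u\<in>set (orthonormal_list E n). cinner u v = 0)"
  have "\<exists>v. ?P v" using orthonormal_extend[OF E inf, of "set (orthonormal_list E n)"] Suc by auto
  hence v: "?P (SOME v. ?P v)" by (rule someI_ex)
  define v where "v = (SOME v. ?P v)"
  have vP: "?P v" using v unfolding v_def .
  have vn: "v \<notin> set (orthonormal_list E n)" using vP by auto
  have "orthonormal (set (orthonormal_list E n @ [v]))"
    unfolding orthonormal_def
  proof (intro conjI ballI impI)
    fix u assume "u \<in> set (orthonormal_list E n @ [v])"
    thus "cinner u u = 1" using Suc vP unfolding orthonormal_def by auto
  next
    fix u w assume uw: "u \<in> set (orthonormal_list E n @ [v])" "w \<in> set (orthonormal_list E n @ [v])" "u \<noteq> w"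
    show "cinner u w = 0"
    proof (cases "u = v")
      case True
      hence "w \<in> set (orthonormal_list E n)" using uw by auto
      hence "cinner w u = 0" using vP True by auto
      thus ?thesis using cinner_cnj[of u w] by simp
    next
      case False
      hence u: "u \<in> set (orthonormal_list E n)" using uw by auto
      show ?thesis
      proof (cases "w = v")
        case True thus ?thesis using vP u by auto
      next
        case False
        hence "w \<in> set (orthonormal_list E n)" using uw by auto
        thus ?thesis using Suc u uw(3) unfolding orthonormal_def by auto
      qed
    qed
  qed
  thus ?case using Suc vP vn by (simp add: v_def[symmetric])
qed

definition orthonormal_seq :: "('i::countable \<Rightarrow> complex) set \<Rightarrow> nat \<Rightarrow> ('i \<Rightarrow> complex)" where
  "orthonormal_seq E n = orthonormal_list E (Suc n) ! n"

lemma orthonormal_seq_props: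
  assumes E: "cvec.subspace E" "E \<subseteq> l2" and inf: "cdim E = \<infinity>"
  shows "orthonormal_seq E n \<in> E" "cinner (orthonormal_seq E n) (orthonormal_seq E n) = 1"
    "j \<noteq> k \<Longrightarrow> cinner (orthonormal_seq E j) (orthonormal_seq E k) = 0"
proof -
  have mem: "orthonormal_seq E k \<in> set (orthonormal_list E N)" if "k < N" for k N
  proof -
    have "orthonormal_seq E k = orthonormal_list E N ! k" unfolding orthonormal_seq_def using orthonormal_list_nth[of "Suc k" N k E] that by simp
    thus ?thesis using that length_orthonormal_list[of E N] by simp
  qed
  have P: "set (orthonormal_list E N) \<subseteq> E \<and> orthonormal (set (orthonormal_list E N)) \<and> distinct (orthonormal_list E N)" for N
    by (rule orthonormal_list_props[OF E inf])
  show "orthonormal_seq E n \<in> E" using mem[of n "Suc n"] P[of "Suc n"] by auto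
  show "cinner (orthonormal_seq E n) (orthonormal_seq E n) = 1" using mem[of n "Suc n"] P[of "Suc n"] by (auto simp: orthonormal_def)
  assume jk: "j \<noteq> k"
  let ?N = "Suc (max j k)"
  have "orthonormal_seq E j \<noteq> orthonormal_seq E k"
  proof -
    have "orthonormal_seq E j = orthonormal_list E ?N ! j" "orthonormal_seq E k = orthonormal_list E ?N ! k" unfolding orthonormal_seq_def
      using orthonormal_list_nth[of "Suc j" ?N j E] orthonormal_list_nth[of "Suc k" ?N k E] by simp_all
    moreover have "distinct (orthonormal_list E ?N)" using P[of ?N] by blast
    ultimately show ?thesis using jk length_orthonormal_list[of E ?N] by (simp del: orthonormal_list.simps add: nth_eq_iff_index_eq)
  qed
  moreover have "orthonormal (set (orthonormal_list E ?N))" using P[of ?N] by blast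
  moreover have "orthonormal_seq E j \<in> set (orthonormal_list E ?N)" "orthonormal_seq E k \<in> set (orthonormal_list E ?N)" by (rule mem, simp)+
  ultimately show "cinner (orthonormal_seq E j) (orthonormal_seq E k) = 0"
    unfolding orthonormal_def by blast
qed

lemma l2norm_cscale_diff_orthonormal:
  assumes uv: "u \<in> l2" "v \<in> l2" "cinner u u = 1" "cinner v v = 1" "cinner u v = 0"
    and mu: "cmod \<mu> = 1"
  shows "(l2norm (cscale \<mu> u - cscale \<mu> v))\<^sup>2 = 2"
proof -
  let ?d = "cscale \<mu> u - cscale \<mu> v"
  have "?d = cscale \<mu> (u - v)" by (simp add: cscale_def fun_eq_iff algebra_simps)
  hence "complex_of_real ((l2norm ?d)\<^sup>2) = cinner (cscale \<mu> (u - v)) (cscale \<mu> (u - v))"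
    by (simp only: cinner_self)
  also have "\<dots> = cnj \<mu> * \<mu> * cinner (u - v) (u - v)"
    by (simp add: cinner_cscale_left cinner_cscale_right)
  also have "cinner (u - v) (u - v) = 2"
    using uv cinner_cnj[of u v] by (simp add: cinner_diff_left cinner_diff_right l2_diff)
  also have "cnj \<mu> * \<mu> = 1" using complex_norm_square[of \<mu>] mu by (simp add: mult.commute)
  finally show ?thesis by (metis mult_1 of_real_eq_iff of_real_numeral)
qed

lemma subspace_eigenspace:
  assumes "bounded_op K"
  shows "cvec.subspace {f\<in>l2. K f = (\<lambda>i. \<mu> * f i)}"
proof -
  have D: "l2_op (\<lambda>f. K f - cscale \<mu> f)"
    by (rule l2_op_diff[OF bounded_op_l2_op[OF assms] l2_op_cscale])
  have "{f\<in>l2. K f = (\<lambda>i. \<mu> * f i)} = {f\<in>l2. K f - cscale \<mu> f = 0}"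
    by (auto simp: cscale_def fun_eq_iff)
  thus ?thesis
    by (simp only: subspace_kernel_linear_on[OF l2_op_linear_on[OF D] subspace_l2])
qed

lemma compact_op_eigenspace_finite_dim:
  fixes K :: "('i::countable \<Rightarrow> complex) \<Rightarrow> ('i \<Rightarrow> complex)"
  assumes K: "compact_op K" and mu: "cmod \<mu> = 1"
  shows "cdim {f\<in>l2. K f = (\<lambda>i. \<mu> * f i)} \<noteq> \<infinity>"
proof
  let ?E = "{f\<in>l2. K f = (\<lambda>i. \<mu> * f i)}"
  assume inf: "cdim ?E = \<infinity>"
  have Esub: "cvec.subspace ?E"
    using K unfolding compact_op_def by (intro subspace_eigenspace) auto
  define e where "e = orthonormal_seq ?E"
  have "?E \<subseteq> l2" by blast
  note e = orthonormal_seq_props[OF Esub this inf, folded e_def]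
  have el: "e n \<in> l2" and Ke: "K (e n) = cscale \<mu> (e n)" for n
    using e(1)[of n] by (auto simp: cscale_def)
  have "l2norm (e n) = 1" for n
  proof -
    have "complex_of_real ((l2norm (e n))\<^sup>2) = 1" using e(2)[of n] by (simp only: cinner_self)
    hence "(l2norm (e n))\<^sup>2 = 1" by (simp only: of_real_eq_1_iff)
    thus ?thesis using l2norm_nonneg[of "e n"] by (simp add: power2_eq_1_iff)
  qed
  hence bounded: "\<exists>B. \<forall>n. l2norm (e n) \<le> B" by (intro exI[of _ 1]) simp
  have "\<forall>n. e n \<in> l2" using el by blast
  from mp[OF mp[OF spec[OF conjunct2[OF K[unfolded compact_op_def]], of e] this] bounded]
  obtain r g where r: "strict_mono r" and g: "g \<in> l2"
    and lim: "(\<lambda>n. l2norm (\<lambda>i. K (e (r n)) i - g i)) \<longlonglongrightarrow> 0"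
    by blast
  have "(\<lambda>i. K (e (r n)) i - g i) = cscale \<mu> (e (r n)) - g" for n by (simp add: Ke fun_eq_iff)
  hence "\<forall>\<^sub>F n in sequentially. l2norm (cscale \<mu> (e (r n)) - g) < 1/2"
    using lim by (intro order_tendstoD(2)) auto
  then obtain N where N: "\<And>n. n \<ge> N \<Longrightarrow> l2norm (cscale \<mu> (e (r n)) - g) < 1/2"
    unfolding eventually_sequentially by auto
  let ?a = "cscale \<mu> (e (r N))" and ?b = "cscale \<mu> (e (r (Suc N)))"
  have "r N \<noteq> r (Suc N)" using strict_monoD[OF r, of N "Suc N"] by simp
  hence "2 = (l2norm (?a - ?b))\<^sup>2"
    using l2norm_cscale_diff_orthonormal[OF el el e(2) e(2) e(3) mu] by simp
  also have "\<dots> \<le> 2 * (l2norm (?a - g))\<^sup>2 + 2 * (l2norm (?b - g))\<^sup>2"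
    using el g by (intro l2norm_diff_sq_le) auto
  also have "\<dots> < 2 * (1/2)\<^sup>2 + 2 * (1/2)\<^sup>2"
    using N[of N] N[of "Suc N"] by (intro add_strict_mono mult_strict_left_mono power_strict_mono) auto
  finally show False by (simp add: power2_eq_square)
qed

section \<open>Isometric pairs\<close>

lemma l2_op_adj: "bounded_op V \<Longrightarrow> l2_op (adj V)"
  by (simp add: bounded_op_adj bounded_op_l2_op)

lemma bounded_op_adjoint_pair: "bounded_op V \<Longrightarrow> adjoint_pair V (adj V)"
  unfolding adjoint_pair_def by (blast intro: cinner_adj)

lemma isometry_l2_op: "isometry V \<Longrightarrow> l2_op V"
  by (simp add: isometry_def bounded_op_l2_op)

lemma isometry_adj_l2_op: "isometry V \<Longrightarrow> l2_op (adj V)"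
  by (simp add: isometry_def l2_op_adj)

lemma isometry_adjoint_pair: "isometry V \<Longrightarrow> adjoint_pair V (adj V)"
  by (simp add: isometry_def bounded_op_adjoint_pair)

definition proj_ker_adj :: "(('i::countable \<Rightarrow> complex) \<Rightarrow> ('i \<Rightarrow> complex)) \<Rightarrow> ('i \<Rightarrow> complex) \<Rightarrow> ('i \<Rightarrow> complex)" where
  "proj_ker_adj V f = f - V (adj V f)"

definition isometry_conj :: "(('i::countable \<Rightarrow> complex) \<Rightarrow> ('i \<Rightarrow> complex)) \<Rightarrow> (('i \<Rightarrow> complex) \<Rightarrow> ('i \<Rightarrow> complex)) \<Rightarrow> ('i \<Rightarrow> complex) \<Rightarrow> ('i \<Rightarrow> complex)" where
  "isometry_conj V X f = V (X (adj V f))"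

lemma orth_proj_proj_ker_adj:
  assumes V: "isometry V"
  shows "orth_proj (proj_ker_adj V)"
  unfolding orth_proj_def
proof (intro conjI ballI)
  note L = isometry_l2_op[OF V] isometry_adj_l2_op[OF V] and ad = isometry_adjoint_pair[OF V]
  show "l2_op (proj_ker_adj V)"
    unfolding proj_ker_adj_def[abs_def] by (rule l2_op_diff[OF l2_op_id l2_op_comp[OF L]])
  have "adjoint_pair (\<lambda>f. V (adj V f)) (\<lambda>f. V (adj V f))"
    by (rule adjoint_pair_comp[OF ad adjoint_pair_sym[OF ad] L(2) L(2)])
  thus "adjoint_pair (proj_ker_adj V) (proj_ker_adj V)"
    unfolding proj_ker_adj_def[abs_def]
    by (rule adjoint_pair_diff[OF adjoint_pair_id _ l2_op_id l2_op_comp[OF L] l2_op_id l2_op_comp[OF L]])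
  fix f :: "'a \<Rightarrow> complex" assume f: "f \<in> l2"
  hence "adj V (proj_ker_adj V f) = 0"
    using adj_isometry_cancel[OF V] by (simp add: proj_ker_adj_def l2_op_apply_diff L l2_op_closed zero_fun_def)
  thus "proj_ker_adj V (proj_ker_adj V f) = proj_ker_adj V f"
    using l2_op_zero[OF L(1)] by (simp add: proj_ker_adj_def[of V "proj_ker_adj V f"])
qed

lemma orth_proj_isometry_conj:
  assumes V: "isometry V" and X: "orth_proj X"
  shows "orth_proj (isometry_conj V X)"
  unfolding orth_proj_def isometry_conj_def[abs_def]
proof (intro conjI ballI)
  note L = isometry_l2_op[OF V] isometry_adj_l2_op[OF V] and ad = isometry_adjoint_pair[OF V]
  note X = orth_projD[OF X]
  show "l2_op (\<lambda>f. V (X (adj V f)))" by (rule l2_op_comp[OF L(1) l2_op_comp[OF X(1) L(2)]])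
  have "adjoint_pair (\<lambda>f. X (adj V f)) (\<lambda>f. V (X f))"
    by (rule adjoint_pair_comp[OF X(2) adjoint_pair_sym[OF ad] L(2) X(1)])
  thus "adjoint_pair (\<lambda>f. V (X (adj V f))) (\<lambda>f. V (X (adj V f)))"
    by (rule adjoint_pair_comp[OF ad _ l2_op_comp[OF X(1) L(2)] L(2)])
  fix f :: "'a \<Rightarrow> complex" assume "f \<in> l2"
  thus "V (X (adj V (V (X (adj V f))))) = V (X (adj V f))"
    using adj_isometry_cancel[OF V] X(3) by (simp add: l2_op_closed L X(1))
qed

lemma isometric_pair_projection_pair:
  assumes "isometric_pair V1 V2"
  shows "projection_pair (proj_ker_adj V1) (isometry_conj V2 (proj_ker_adj V1))"
  using assms unfolding projection_pair_def isometric_pair_def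
  by (simp add: orth_proj_proj_ker_adj orth_proj_isometry_conj)

lemma isometry_conj_proj_ker_adj_apply:
  assumes V: "isometric_pair V1 V2" and f: "f \<in> l2"
  shows "isometry_conj V2 (proj_ker_adj V1) f = V2 (adj V2 f) - V1 (V2 (adj V1 (adj V2 f)))"
proof -
  have I: "isometry V1" "isometry V2" and comm: "\<And>f. f \<in> l2 \<Longrightarrow> V1 (V2 f) = V2 (V1 f)"
    using V by (auto simp: isometric_pair_def)
  note L = isometry_l2_op[OF I(1)] isometry_adj_l2_op[OF I(1)] isometry_l2_op[OF I(2)] isometry_adj_l2_op[OF I(2)]
  show ?thesis
    using f comm[of "adj V1 (adj V2 f)"]
    by (simp add: isometry_conj_def proj_ker_adj_def l2_op_apply_diff l2_op_closed L fun_eq_iff)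
qed

lemma defect_eq_proj_diff:
  assumes "isometric_pair V1 V2" and "f \<in> l2"
  shows "defect V1 V2 f = proj_ker_adj V1 f - isometry_conj V2 (proj_ker_adj V1) f"
  using isometry_conj_proj_ker_adj_apply[OF assms]
  by (simp add: defect_def proj_ker_adj_def fun_eq_iff)

lemma rank_commut_eq_rank_adjoint:
  assumes B: "bounded_op V1" "bounded_op V2"
  shows "rank (commut V1 V2) = cdim ((\<lambda>f. adj V1 (V2 f) - V2 (adj V1 f)) ` l2)"
proof -
  note L = bounded_op_l2_op[OF B(1)] l2_op_adj[OF B(1)] bounded_op_l2_op[OF B(2)] l2_op_adj[OF B(2)]
  note ad = bounded_op_adjoint_pair[OF B(1)] bounded_op_adjoint_pair[OF B(2)]
  have commut_eq: "commut V1 V2 = (\<lambda>f. adj V2 (V1 f) - V1 (adj V2 f))"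
    by (simp add: commut_def fun_eq_iff)
  have "adjoint_pair (\<lambda>f. adj V2 (V1 f)) (\<lambda>f. adj V1 (V2 f))"
    by (rule adjoint_pair_comp[OF adjoint_pair_sym[OF ad(2)] ad(1) L(1) L(3)])
  moreover have "adjoint_pair (\<lambda>f. V1 (adj V2 f)) (\<lambda>f. V2 (adj V1 f))"
    by (rule adjoint_pair_comp[OF ad(1) adjoint_pair_sym[OF ad(2)] L(4) L(2)])
  ultimately have "adjoint_pair (commut V1 V2) (\<lambda>f. adj V1 (V2 f) - V2 (adj V1 f))"
    unfolding commut_eq
    by (rule adjoint_pair_diff[OF _ _ l2_op_comp[OF L(4,1)] l2_op_comp[OF L(1,4)]
          l2_op_comp[OF L(2,3)] l2_op_comp[OF L(3,2)]])
  thus ?thesis unfolding rank_def commut_eq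
    by (rule rank_adjoint_pair_eq[OF l2_op_diff[OF l2_op_comp[OF L(4,1)] l2_op_comp[OF L(1,4)]]
          l2_op_diff[OF l2_op_comp[OF L(2,3)] l2_op_comp[OF L(3,2)]]])
qed

text \<open>\<open>(I - P)R = V\<^sub>1 T V\<^sub>2\<^sup>*\<close>, where \<open>T = V\<^sub>1\<^sup>*V\<^sub>2 - V\<^sub>2V\<^sub>1\<^sup>*\<close> is the adjoint of \<open>[V\<^sub>2\<^sup>*,V\<^sub>1]\<close>.\<close>

lemma rank_commut_eq:
  assumes V: "isometric_pair V1 V2"
  defines "R \<equiv> isometry_conj V2 (proj_ker_adj V1)"
  shows "rank (commut V1 V2) = cdim ((\<lambda>f. R f - proj_ker_adj V1 (R f)) ` l2)"
proof -
  have I: "isometry V1" "isometry V2" using V by (auto simp: isometric_pair_def)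
  note L = isometry_l2_op[OF I(1)] isometry_adj_l2_op[OF I(1)] isometry_l2_op[OF I(2)] isometry_adj_l2_op[OF I(2)]
  define T where "T f = adj V1 (V2 f) - V2 (adj V1 f)" for f
  have T: "l2_op T"
    unfolding T_def[abs_def] by (rule l2_op_diff[OF l2_op_comp[OF L(2,3)] l2_op_comp[OF L(3,2)]])
  have "rank (commut V1 V2) = cdim (T ` l2)"
    unfolding T_def[abs_def] using I by (intro rank_commut_eq_rank_adjoint) (simp_all add: isometry_def)
  also have "\<dots> = cdim (V1 ` T ` l2)"
    by (rule cdim_image_inj[symmetric, OF linear_on_subset[OF l2_op_linear_on[OF L(1)] range_subset_l2[OF T]]
          subspace_range[OF T]])
       (use adj_isometry_cancel[OF I(1)] range_subset_l2[OF T] in \<open>metis inj_on_def subsetD\<close>)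
  also have "V1 ` T ` l2 = (\<lambda>f. V1 (T (adj V2 f))) ` l2"
    using adj_isometry_cancel[OF I(2)] l2_op_closed[OF L(3)] l2_op_closed[OF L(4)]
    by (force simp: image_iff)
  also have "\<dots> = (\<lambda>f. R f - proj_ker_adj V1 (R f)) ` l2"
  proof (rule image_cong[OF refl])
    fix f :: "'a \<Rightarrow> complex" assume f: "f \<in> l2"
    have "adj V1 (R f) = adj V1 (V2 (adj V2 f)) - adj V1 (V1 (V2 (adj V1 (adj V2 f))))"
      unfolding R_def isometry_conj_proj_ker_adj_apply[OF V f]
      using f by (simp add: l2_op_apply_diff l2_op_closed L fun_eq_iff)
    also have "\<dots> = T (adj V2 f)"
      using f adj_isometry_cancel[OF I(1)] by (simp add: T_def l2_op_closed L)
    finally have "adj V1 (R f) = T (adj V2 f)" .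
    thus "V1 (T (adj V2 f)) = R f - proj_ker_adj V1 (R f)"
      by (simp add: proj_ker_adj_def)
  qed
  finally show ?thesis .
qed

theorem corollary3p6:
  fixes V1 V2 :: "('i::countable \<Rightarrow> complex) \<Rightarrow> ('i \<Rightarrow> complex)"
  assumes "isometric_pair V1 V2"
    and "compact_op (defect V1 V2)"
  shows "ereal_of_enat (rank (defect V1 V2))
         = 2 * ereal_of_enat (rank (commut V1 V2))
           + ereal_of_enat (cdim (eigsp V1 V2 1)) - ereal_of_enat (cdim (eigsp V1 V2 (-1)))"
proof -
  interpret projection_pair "proj_ker_adj V1" "isometry_conj V2 (proj_ker_adj V1)"
    by (rule isometric_pair_projection_pair[OF assms(1)])
  have defect: "defect V1 V2 f = C f" if "f \<in> l2" for f
    using defect_eq_proj_diff[OF assms(1) that] by (simp add: C_def)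
  have rank_defect: "rank (defect V1 V2) = cdim (C ` l2)"
    unfolding rank_def by (rule arg_cong[where f = cdim], rule image_cong[OF refl defect])
  have rank_commut: "rank (commut V1 V2) = cdim (Q ` l2)"
    using rank_commut_eq[OF assms(1)] by (simp add: Q_def[abs_def])
  have eigsp: "eigsp V1 V2 1 = E1" "eigsp V1 V2 (-1) = Em1"
    using defect by (auto simp: eigsp_def E1_def Em1_def fun_eq_iff)
  have "cdim (eigsp V1 V2 1) \<noteq> \<infinity>" "cdim (eigsp V1 V2 (-1)) \<noteq> \<infinity>"
    unfolding eigsp_def by (rule compact_op_eigenspace_finite_dim[OF assms(2)], simp)+
  thus ?thesis unfolding rank_defect rank_commut eigsp by (rule rank_C_formula)
qed

end
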